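(* Fix $(k_1,k_2,k_3)\in\mathbb Z_{\ge0}^3$ and $\sigma\in\mathfrak S_3$. For every reduced fraction $t\in(0,\infty)\cap\mathbb Q$, \[ C_t=\begin{bmatrix}-1&0\\0&1\end{bmatrix}\overline M_t\begin{bmatrix}1&0\\0&-1\end{bmatrix}, \] where $C_t$ is the $(k_1,k_2,k_3,\sigma)$-generalized Cohn matrix attached to $t$ and $\overline M_t$ is the endpoint-completed matrix.
   Context: $K:=3+k_1+k_2+k_3$. Farey tree $\mathrm{F}\mathbb T$: rooted planar binary tree with root $(\frac01,\frac11,\frac10)$, each vertex $(\frac ab,\frac cd,\frac ef)$ having left child $(\frac ab,\frac{a+c}{b+d},\frac cd)$ and right child $(\frac cd,\frac{c+e}{d+f},\frac ef)$ ($\frac10$ represents $\infty$); write $r\oplus t$ for the mediant. Labeled GM tree $\mathrm M\mathbb T(k_1,k_2,k_3,\sigma)$: rooted planar binary tree with root $((1,\sigma(1)),(k_{\sigma(2)}+2,\sigma(2)),(1,\sigma(3)))$; a vertex $((a,h),(b,i),(c,j))$ has left child $((a,h),(\frac{a^2+k_jab+b^2}{c},j),(b,i))$ and right child $((b,i),(\frac{b^2+k_hbc+c^2}{a},h),(c,j))$. For a vertex $(r,t,s)$ of $\mathrm{F}\mathbb T$, let $((m_r,i_r),(m_t,i_t),(m_s,i_s))$ be the vertex of $\mathrm M\mathbb T$ at the same position, and set $k_r:=k_{i_r}$ (similarly $k_s:=k_{i_s}$); this depends only on the rational, not the vertex. Generalized Cohn matrices: $C_{0/1}=\begin{bmatrix}K&-Kk_{\sigma(1)}-1\\1&-k_{\sigma(1)}\end{bmatrix}$,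 $C_{1/1}=\begin{bmatrix}K(k_{\sigma(2)}+2)-k_{\sigma(2)}-1&K-1\\k_{\sigma(2)}+2&1\end{bmatrix}$, $C_{1/0}=\begin{bmatrix}K-k_{\sigma(3)}-1&K-k_{\sigma(3)}-2\\1&1\end{bmatrix}$, and for every vertex $(r,t,s)$ of $\mathrm{F}\mathbb T$, $C_{r\oplus t}=C_rC_t-D_s$ and $C_{t\oplus s}=C_tC_s-D_r$, where $D_u:=\begin{bmatrix}k_u&Kk_u\\0&k_u\end{bmatrix}$. Modified lattice: the planar graph with vertex set $\mathbb Z^2$ whose edges are the horizontal unit segments, the vertical unit segments, and the diagonal segments of slope $-1$ joining $(i,j+1)$ and $(i+1,j)$. Endpoint-completed word $\overline\omega_t$: for $t=p/q$ reduced, choose $\varepsilon>0$ sufficiently small (so that the shifted segment has the same order of edge and triangle events away from the endpoints and passes through no lattice vertex and no edge midpoint), and let $\overline L_t$ be the segment from $(-\varepsilon,0)$ to $(q-\varepsilon,p)$, oriented from lower left to upper right. Read the edges of the modified lattice crossed by $\overline L_t$ in order, with the half-open convention that the horizontal edge containing the initial endpoint is counted as crossed and the edge containing the terminal endpoint is not. A horizontal (resp. diagonal, vertical) edge contributes $x$ (resp. $y$, $z$) if its midpoint is not on the right-hand side of $\overline L_t$, and $x^{-1}$ (resp. $y^{-1}$, $z^{-1}$) if it is. The concatenation is $\overline\omega_t$. Endpoint-completed matrix: $\overline M_t$ is obtained from $\overline\omega_t$ by substituting $x\mapsto X=\begin{bmatrix}-k_{\sigma(1)}&-1\\1&0\end{bmatrix}$,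 $y\mapsto Y=\begin{bmatrix}1&-1\\k_{\sigma(2)}+2&-k_{\sigma(2)}-1\end{bmatrix}$, $z\mapsto Z=\begin{bmatrix}1&-k_{\sigma(3)}-2\\1&-k_{\sigma(3)}-1\end{bmatrix}$ and multiplying. *)

theory Defs
  imports "HOL-Analysis.Analysis" "HOL-Combinatorics.Permutations"
begin

datatype m2 = M2 int int int int

fun m2_mult :: "m2 \<Rightarrow> m2 \<Rightarrow> m2" where
  "m2_mult (M2 a b c d) (M2 e f g h) = M2 (a*e+b*g) (a*f+b*h) (c*e+d*g) (c*f+d*h)"

fun m2_minus :: "m2 \<Rightarrow> m2 \<Rightarrow> m2" where
  "m2_minus (M2 a b c d) (M2 e f g h) = M2 (a-e) (b-f) (c-g) (d-h)"

definition m2_one :: m2 where "m2_one = M2 1 0 0 1"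

fun m2_det :: "m2 \<Rightarrow> int" where
  "m2_det (M2 a b c d) = a*d - b*c"

text \<open>Adjugate; for a matrix of determinant 1 this is its inverse.\<close>
fun m2_adj :: "m2 \<Rightarrow> m2" where
  "m2_adj (M2 a b c d) = M2 d (-b) (-c) a"

definition kfun :: "nat \<Rightarrow> nat \<Rightarrow> nat \<Rightarrow> nat \<Rightarrow> int" where
  "kfun k1 k2 k3 i = (if i = 1 then int k1 else if i = 2 then int k2 else int k3)"

definition Kc :: "(nat \<Rightarrow> int) \<Rightarrow> int" where
  "Kc k = 3 + k 1 + k 2 + k 3"

section \<open>Farey tree (fraction a/b encoded as the pair (a,b); 1/0 is infinity)\<close>

type_synonym frac = "nat \<times> nat"
type_synonym ftrip = "frac \<times> frac \<times> frac"

definition mediant :: "frac \<Rightarrow> frac \<Rightarrow> frac" where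
  "mediant r t = (fst r + fst t, snd r + snd t)"

text \<open>A position in a rooted planar binary tree is a list of directions
  (True = left child, False = right child); the head of the list is the last step.\<close>
fun farey_child :: "bool \<Rightarrow> ftrip \<Rightarrow> ftrip" where
  "farey_child d (r, t, s) = (if d then (r, mediant r t, t) else (t, mediant t s, s))"

fun farey_vertex :: "bool list \<Rightarrow> ftrip" where
  "farey_vertex [] = ((0,1), (1,1), (1,0))"
| "farey_vertex (d # w) = farey_child d (farey_vertex w)"

type_synonym gtrip = "(int \<times> nat) \<times> (int \<times> nat) \<times> (int \<times> nat)"

fun gm_child :: "(nat \<Rightarrow> int) \<Rightarrow> bool \<Rightarrow> gtrip \<Rightarrow> gtrip" where
  "gm_child k d ((a,h), (b,i), (c,j)) =
     (if d then ((a,h), ((a^2 + k j * a * b + b^2) div c, j), (b,i))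
      else ((b,i), ((b^2 + k h * b * c + c^2) div a, h), (c,j)))"

fun gm_vertex :: "(nat \<Rightarrow> int) \<Rightarrow> (nat \<Rightarrow> nat) \<Rightarrow> bool list \<Rightarrow> gtrip" where
  "gm_vertex k \<sigma> [] = ((1, \<sigma> 1), (k (\<sigma> 2) + 2, \<sigma> 2), (1, \<sigma> 3))"
| "gm_vertex k \<sigma> (d # w) = gm_child k d (gm_vertex k \<sigma> w)"

definition C01 :: "(nat \<Rightarrow> int) \<Rightarrow> (nat \<Rightarrow> nat) \<Rightarrow> m2" where
  "C01 k \<sigma> = M2 (Kc k) (- Kc k * k (\<sigma> 1) - 1) 1 (- k (\<sigma> 1))"

definition C11 :: "(nat \<Rightarrow> int) \<Rightarrow> (nat \<Rightarrow> nat) \<Rightarrow> m2" where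
  "C11 k \<sigma> = M2 (Kc k * (k (\<sigma> 2) + 2) - k (\<sigma> 2) - 1) (Kc k - 1) (k (\<sigma> 2) + 2) 1"

definition C10 :: "(nat \<Rightarrow> int) \<Rightarrow> (nat \<Rightarrow> nat) \<Rightarrow> m2" where
  "C10 k \<sigma> = M2 (Kc k - k (\<sigma> 3) - 1) (Kc k - k (\<sigma> 3) - 2) 1 1"

text \<open>D_u for a rational u whose label is l (so k_u = k l).\<close>
definition Dmat :: "(nat \<Rightarrow> int) \<Rightarrow> nat \<Rightarrow> m2" where
  "Dmat k l = M2 (k l) (Kc k * k l) 0 (k l)"

text \<open>Triple (C_r, C_t, C_s) at the vertex (r,t,s) of the Farey tree at a given position;
  the labels are read off the GM tree at the same position.\<close>
fun cohn_vertex :: "(nat \<Rightarrow> int) \<Rightarrow> (nat \<Rightarrow> nat) \<Rightarrow> bool list \<Rightarrow> m2 \<times> m2 \<times> m2" where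
  "cohn_vertex k \<sigma> [] = (C01 k \<sigma>, C11 k \<sigma>, C10 k \<sigma>)"
| "cohn_vertex k \<sigma> (d # w) =
     (case cohn_vertex k \<sigma> w of (Cr, Ct, Cs) \<Rightarrow>
      case gm_vertex k \<sigma> w of ((_, h), (_, i), (_, j)) \<Rightarrow>
        (if d then (Cr, m2_minus (m2_mult Cr Ct) (Dmat k j), Ct)
         else (Ct, m2_minus (m2_mult Ct Cs) (Dmat k h), Cs)))"

definition cohn_matrix :: "(nat \<Rightarrow> int) \<Rightarrow> (nat \<Rightarrow> nat) \<Rightarrow> nat \<Rightarrow> nat \<Rightarrow> m2" where
  "cohn_matrix k \<sigma> p q =
     fst (snd (cohn_vertex k \<sigma> (SOME w. fst (snd (farey_vertex w)) = (p, q))))"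

datatype etype = Hor | Diag | Vert

type_synonym edge = "etype \<times> int \<times> int"

fun edge_ends :: "edge \<Rightarrow> (real \<times> real) \<times> (real \<times> real)" where
  "edge_ends (Hor, i, j) = ((of_int i, of_int j), (of_int i + 1, of_int j))"
| "edge_ends (Diag, i, j) = ((of_int i, of_int j + 1), (of_int i + 1, of_int j))"
| "edge_ends (Vert, i, j) = ((of_int i, of_int j), (of_int i, of_int j + 1))"

definition edge_mid :: "edge \<Rightarrow> real \<times> real" where
  "edge_mid e = (case edge_ends e of ((x1, y1), (x2, y2)) \<Rightarrow> ((x1 + x2) / 2, (y1 + y2) / 2))"

definition seg_point :: "nat \<Rightarrow> nat \<Rightarrow> real \<Rightarrow> real \<Rightarrow> real \<times> real" where
  "seg_point p q \<epsilon> s = (- \<epsilon> + s * real q, s * real p)"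

definition crosses_at :: "nat \<Rightarrow> nat \<Rightarrow> real \<Rightarrow> edge \<Rightarrow> real \<Rightarrow> bool" where
  "crosses_at p q \<epsilon> e s \<longleftrightarrow> 0 \<le> s \<and> s < 1 \<and>
     (\<exists>u\<in>{0..1::real}. case edge_ends e of ((x1, y1), (x2, y2)) \<Rightarrow>
        seg_point p q \<epsilon> s = ((1 - u) * x1 + u * x2, (1 - u) * y1 + u * y2))"

definition crossed_edges :: "nat \<Rightarrow> nat \<Rightarrow> real \<Rightarrow> edge set" where
  "crossed_edges p q \<epsilon> = {e. \<exists>s. crosses_at p q \<epsilon> e s}"

definition cross_param :: "nat \<Rightarrow> nat \<Rightarrow> real \<Rightarrow> edge \<Rightarrow> real" where
  "cross_param p q \<epsilon> e = (THE s. crosses_at p q \<epsilon> e s)"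

definition crossed_list :: "nat \<Rightarrow> nat \<Rightarrow> real \<Rightarrow> edge list" where
  "crossed_list p q \<epsilon> = (THE es. distinct es \<and> set es = crossed_edges p q \<epsilon> \<and>
      sorted_wrt (\<lambda>e f. cross_param p q \<epsilon> e < cross_param p q \<epsilon> f) es)"

definition right_side :: "nat \<Rightarrow> nat \<Rightarrow> real \<Rightarrow> real \<times> real \<Rightarrow> bool" where
  "right_side p q \<epsilon> P \<longleftrightarrow> real q * snd P - real p * (fst P + \<epsilon>) < 0"

text \<open>A letter: edge type (Hor = x, Diag = y, Vert = z) with exponent +1 (True) or -1 (False).\<close>
definition word_eps :: "nat \<Rightarrow> nat \<Rightarrow> real \<Rightarrow> (etype \<times> bool) list" where
  "word_eps p q \<epsilon> = map (\<lambda>e. (fst e, \<not> right_side p q \<epsilon> (edge_mid e))) (crossed_list p q \<epsilon>)"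

definition omega_bar :: "nat \<Rightarrow> nat \<Rightarrow> (etype \<times> bool) list" where
  "omega_bar p q = (THE w. eventually (\<lambda>\<epsilon>. word_eps p q \<epsilon> = w) (at_right 0))"

definition Xm :: "(nat \<Rightarrow> int) \<Rightarrow> (nat \<Rightarrow> nat) \<Rightarrow> m2" where
  "Xm k \<sigma> = M2 (- k (\<sigma> 1)) (-1) 1 0"
definition Ym :: "(nat \<Rightarrow> int) \<Rightarrow> (nat \<Rightarrow> nat) \<Rightarrow> m2" where
  "Ym k \<sigma> = M2 1 (-1) (k (\<sigma> 2) + 2) (- k (\<sigma> 2) - 1)"
definition Zm :: "(nat \<Rightarrow> int) \<Rightarrow> (nat \<Rightarrow> nat) \<Rightarrow> m2" where
  "Zm k \<sigma> = M2 1 (- k (\<sigma> 3) - 2) 1 (- k (\<sigma> 3) - 1)"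

lemma det_XYZ: "m2_det (Xm k \<sigma>) = 1" "m2_det (Ym k \<sigma>) = 1" "m2_det (Zm k \<sigma>) = 1"
  by (simp_all add: Xm_def Ym_def Zm_def algebra_simps)

fun letter_matrix :: "(nat \<Rightarrow> int) \<Rightarrow> (nat \<Rightarrow> nat) \<Rightarrow> etype \<times> bool \<Rightarrow> m2" where
  "letter_matrix k \<sigma> (Hor, b) = (if b then Xm k \<sigma> else m2_adj (Xm k \<sigma>))"
| "letter_matrix k \<sigma> (Diag, b) = (if b then Ym k \<sigma> else m2_adj (Ym k \<sigma>))"
| "letter_matrix k \<sigma> (Vert, b) = (if b then Zm k \<sigma> else m2_adj (Zm k \<sigma>))"

definition word_matrix :: "(nat \<Rightarrow> int) \<Rightarrow> (nat \<Rightarrow> nat) \<Rightarrow> (etype \<times> bool) list \<Rightarrow> m2" where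
  "word_matrix k \<sigma> w = foldr (\<lambda>l M. m2_mult (letter_matrix k \<sigma> l) M) w m2_one"

definition M_bar :: "(nat \<Rightarrow> int) \<Rightarrow> (nat \<Rightarrow> nat) \<Rightarrow> nat \<Rightarrow> nat \<Rightarrow> m2" where
  "M_bar k \<sigma> p q = word_matrix k \<sigma> (omega_bar p q)"

end

theory Submission
  imports Defs
begin

text \<open>
  The endpoint-completed word of \<open>p/q\<close> is computed explicitly: its \<open>k\<close>-th letter comes from
  the crossing of the shifted segment with the antidiagonals \<open>x + y = \<lfloor>k/2\<rfloor>\<close>, whose position
  is governed by \<open>\<lceil>n q/(p + q)\<rceil>\<close>.  For a Farey pair \<open>a/b < c/d\<close> the word of the mediant is then
  the concatenation of the two words with its central letter \<open>\<ell>\<close> inverted, and the point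
  reflection in \<open>(q/2, p/2)\<close> shows that deleting \<open>\<ell>\<close> from the word of \<open>p/q\<close> leaves a word with
  the matrix of \<open>x y z\<close>.  As \<open>L + L\<^sup>-\<^sup>1 = tr L \<cdot> I\<close> in \<open>SL\<^sub>2\<close>, this gives
  \<open>M\<^sub>r M\<^sub>s + M\<^sub>r\<^sub>\<oplus>\<^sub>s = tr(\<ell>) M(x y z)\<close>, which after conjugation by \<open>diag(-1, 1)\<close> is the recursion
  \<open>C\<^sub>r\<^sub>\<oplus>\<^sub>s = C\<^sub>r C\<^sub>s - D\<close> defining the Cohn matrices; induction along the Farey tree concludes.
\<close>

fun m2_add :: "m2 \<Rightarrow> m2 \<Rightarrow> m2" where
  "m2_add (M2 a b c d) (M2 e f g h) = M2 (a+e) (b+f) (c+g) (d+h)"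

fun m2_smult :: "int \<Rightarrow> m2 \<Rightarrow> m2" where
  "m2_smult s (M2 a b c d) = M2 (s*a) (s*b) (s*c) (s*d)"

fun m2_trace :: "m2 \<Rightarrow> int" where
  "m2_trace (M2 a b c d) = a + d"

lemma m2_mult_assoc: "m2_mult (m2_mult A B) C = m2_mult A (m2_mult B C)"
  by (cases A; cases B; cases C) (simp add: algebra_simps)

lemma m2_mult_one_left [simp]: "m2_mult m2_one A = A"
  by (cases A) (simp add: m2_one_def)

lemma m2_mult_one_right [simp]: "m2_mult A m2_one = A"
  by (cases A) (simp add: m2_one_def)

lemma m2_det_mult: "m2_det (m2_mult A B) = m2_det A * m2_det B"
  by (cases A; cases B) (simp add: algebra_simps)

lemma m2_adj_mult: "m2_adj (m2_mult A B) = m2_mult (m2_adj B) (m2_adj A)"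
  by (cases A; cases B) (simp add: algebra_simps)

lemma m2_mult_adj_right: "m2_det A = 1 \<Longrightarrow> m2_mult A (m2_adj A) = m2_one"
  by (cases A) (simp add: m2_one_def algebra_simps)

lemma m2_mult_adj_left: "m2_det A = 1 \<Longrightarrow> m2_mult (m2_adj A) A = m2_one"
  by (cases A) (simp add: m2_one_def algebra_simps)

lemma m2_add_adj: "m2_add A (m2_adj A) = m2_smult (m2_trace A) m2_one"
  by (cases A) (simp add: m2_one_def algebra_simps)

lemma m2_mult_add_left: "m2_mult (m2_add A B) C = m2_add (m2_mult A C) (m2_mult B C)"
  by (cases A; cases B; cases C) (simp add: algebra_simps)

lemma m2_mult_add_right: "m2_mult A (m2_add B C) = m2_add (m2_mult A B) (m2_mult A C)"
  by (cases A; cases B; cases C) (simp add: algebra_simps)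

lemma m2_mult_smult_left: "m2_mult (m2_smult s A) B = m2_smult s (m2_mult A B)"
  by (cases A; cases B) (simp add: algebra_simps)

lemma m2_mult_smult_right: "m2_mult A (m2_smult s B) = m2_smult s (m2_mult A B)"
  by (cases A; cases B) (simp add: algebra_simps)

lemma m2_adj_adj [simp]: "m2_adj (m2_adj A) = A"
  by (cases A) simp

lemma m2_adj_one [simp]: "m2_adj m2_one = m2_one"
  by (simp add: m2_one_def)

lemma m2_det_adj: "m2_det (m2_adj A) = m2_det A"
  by (cases A) (simp add: algebra_simps)

lemma scaled_quotient_bounds:
  fixes N M D r n :: int
  assumes "0 < N" "0 \<le> M" "0 \<le> r" "r < N" "-N < n" "n < M" "N*D = M*r + n"
  shows "0 \<le> D" "D < M"
proof -
  have "0 \<le> M*r" using assms by simp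
  then have "N*(-1) < N*D" using assms by linarith
  then show "0 \<le> D" using mult_less_cancel_left_pos[OF assms(1), of "-1" D] by simp
  have "M*r \<le> M*(N-1)" using assms by (intro mult_left_mono) auto
  then have "N*D < N*M" using assms by (simp add: algebra_simps)
  then show "D < M" using assms(1) by (simp add: mult_less_cancel_left_pos)
qed

lemma pos_iff_pos_of_scaled:
  fixes N M A B r :: int
  assumes "0 < N" "0 \<le> M" "-(M+N) < r" "r < N" "B \<noteq> 0" "N*B = M*A + r"
  shows "0 < B \<longleftrightarrow> 0 < A"
proof
  assume "0 < B"
  then have "N*1 \<le> N*B" using assms(1) by (intro mult_left_mono) auto
  moreover have "M*A \<le> M*0" if "A \<le> 0" using that assms(2) by (intro mult_left_mono) auto
  ultimately show "0 < A" using assms by (cases "A \<le> 0") auto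
next
  assume "0 < A"
  then have "M*1 \<le> M*A" using assms(2) by (intro mult_left_mono) auto
  moreover have "N*B \<le> N*(-1)" if "B < 0" using that assms(1) by (intro mult_left_mono) auto
  ultimately show "0 < B" using assms by (cases "B < 0") auto
qed

lemma coprime_mediant:
  fixes a b c d :: int
  assumes "b*c = a*d + 1"
  shows "coprime (a+c) (b+d)"
proof (rule coprimeI)
  fix g assume "g dvd a+c" "g dvd b+d"
  then have "g dvd b*(a+c) - a*(b+d)" by simp
  then show "is_unit g" using assms by (simp add: algebra_simps)
qed

lemma coprime_cross_mult_eq:
  fixes p q a b :: nat
  assumes "coprime p q" "coprime a b" "b*p = a*q" "0 < p"
  shows "p = a \<and> q = b"
proof -
  have "p dvd a*q" "a dvd b*p" using assms(3) by (metis dvd_triv_right, simp)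
  then have "p dvd a" "a dvd p"
    using assms(1,2) by (simp_all add: coprime_dvd_mult_left_iff coprime_dvd_mult_right_iff coprime_commute)
  then have "p = a" by (simp add: dvd_antisym)
  then show ?thesis using assms(3,4) by simp
qed

lemma of_int_add_frac_iff:
  fixes \<delta> :: real
  assumes "0 < \<delta>" "\<delta> < 1"
  shows "of_int a + \<delta> \<le> of_int b \<longleftrightarrow> a < b" "of_int a + \<delta> < of_int b \<longleftrightarrow> a < b"
    "of_int a \<le> of_int b + \<delta> \<longleftrightarrow> a \<le> b" "of_int a < of_int b + \<delta> \<longleftrightarrow> a \<le> b"
  using assms by (smt (verit) int_less_real_le int_le_real_less of_int_less_iff)+

lemma of_int_less_of_nat_iff: "real_of_int j < real p \<longleftrightarrow> j < int p"
  by (metis of_int_less_iff of_int_of_nat_eq)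

lemma divide_less_divide_iff:
  fixes a b c d :: real
  shows "0 < b \<Longrightarrow> 0 < d \<Longrightarrow> a / b < c / d \<longleftrightarrow> a * d < c * b"
  by (simp add: field_simps)

lemma sorted_wrt_image_eq:
  fixes f :: "'a \<Rightarrow> 'b::linorder"
  assumes "sorted_wrt (\<lambda>x y. f x < f y) xs" "sorted_wrt (\<lambda>x y. f x < f y) ys" "set xs = set ys"
  shows "xs = ys"
proof -
  have strict: "sorted_wrt (<) (map f xs)" "sorted_wrt (<) (map f ys)"
    using assms(1,2) by (simp_all add: sorted_wrt_map)
  moreover have "set (map f ys) = set (map f xs)" using assms(3) by simp
  ultimately have "map f xs = map f ys" using strict_sorted_equal by metis
  moreover have "inj_on f (set xs)" using strict(1) by (simp add: strict_sorted_iff distinct_map)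
  ultimately show ?thesis using assms(3) by (simp add: inj_on_map_eq_map)
qed

definition letter_inv :: "etype \<times> bool \<Rightarrow> etype \<times> bool" where
  "letter_inv l = (fst l, \<not> snd l)"

lemma letter_inv_inv [simp]: "letter_inv (letter_inv l) = l"
  by (simp add: letter_inv_def)

lemma letter_matrix_det: "m2_det (letter_matrix k \<sigma> l) = 1"
proof (cases l)
  case (Pair t b)
  then show ?thesis by (cases t) (simp_all add: det_XYZ m2_det_adj)
qed

lemma letter_matrix_inv: "letter_matrix k \<sigma> (letter_inv l) = m2_adj (letter_matrix k \<sigma> l)"
proof (cases l)
  case (Pair t b)
  then show ?thesis by (cases t) (simp_all add: letter_inv_def)
qed

lemma word_matrix_Nil [simp]: "word_matrix k \<sigma> [] = m2_one"
  by (simp add: word_matrix_def)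

lemma word_matrix_Cons [simp]:
  "word_matrix k \<sigma> (l # w) = m2_mult (letter_matrix k \<sigma> l) (word_matrix k \<sigma> w)"
  by (simp add: word_matrix_def)

lemma word_matrix_append:
  "word_matrix k \<sigma> (u @ v) = m2_mult (word_matrix k \<sigma> u) (word_matrix k \<sigma> v)"
  by (induction u) (simp_all add: m2_mult_assoc)

lemma word_matrix_det: "m2_det (word_matrix k \<sigma> u) = 1"
  by (induction u) (simp_all add: m2_det_mult letter_matrix_det m2_one_def)

lemma word_matrix_rev_inv:
  "word_matrix k \<sigma> (rev (map letter_inv u)) = m2_adj (word_matrix k \<sigma> u)"
  by (induction u) (simp_all add: word_matrix_append letter_matrix_inv m2_adj_mult)

lemma word_matrix_mult_rev_inv:
  "m2_mult (word_matrix k \<sigma> u) (word_matrix k \<sigma> (rev (map letter_inv u))) = m2_one"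
  by (simp add: word_matrix_rev_inv m2_mult_adj_right word_matrix_det)

text \<open>Because \<open>L + L\<^sup>-\<^sup>1 = tr L \<cdot> I\<close> in \<open>SL\<^sub>2\<close>.\<close>
lemma word_matrix_add_invert_letter:
  assumes "i < length A"
  shows "m2_add (word_matrix k \<sigma> A) (word_matrix k \<sigma> (A[i := letter_inv (A!i)])) =
         m2_smult (m2_trace (letter_matrix k \<sigma> (A!i)))
           (word_matrix k \<sigma> (take i A @ drop (Suc i) A))"
proof -
  define U where "U = word_matrix k \<sigma> (take i A)"
  define V where "V = word_matrix k \<sigma> (drop (Suc i) A)"
  define L where "L = letter_matrix k \<sigma> (A!i)"
  have "word_matrix k \<sigma> A = m2_mult U (m2_mult L V)"
    using id_take_nth_drop[OF assms] by (metis U_def V_def L_def word_matrix_append word_matrix_Cons)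
  moreover have "word_matrix k \<sigma> (A[i := letter_inv (A!i)]) = m2_mult U (m2_mult (m2_adj L) V)"
    using upd_conv_take_nth_drop[OF assms]
    by (simp add: word_matrix_append U_def V_def L_def letter_matrix_inv)
  ultimately have "m2_add (word_matrix k \<sigma> A) (word_matrix k \<sigma> (A[i := letter_inv (A!i)]))
      = m2_mult U (m2_mult (m2_add L (m2_adj L)) V)"
    by (simp add: m2_mult_add_left m2_mult_add_right)
  also have "\<dots> = m2_smult (m2_trace L) (m2_mult U V)"
    by (simp add: m2_add_adj m2_mult_smult_left m2_mult_smult_right)
  finally show ?thesis
    by (simp add: word_matrix_append U_def V_def L_def)
qed

section \<open>Arithmetic description of the cutting word\<close>

text \<open>The segment from \<open>(0,0)\<close> to \<open>(q,p)\<close>, shifted left by a small \<open>\<epsilon>\<close>, meets the antidiagonal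
  \<open>x + y = n\<close> (\<open>0 \<le> n < p + q\<close>) in the diagonal edge whose right end has abscissa
  \<open>diag_col p q n = \<lceil>n q / (p + q)\<rceil>\<close>; \<open>diag_gap p q n \<in> [0, p+q)\<close> is \<open>(p + q)\<close> times the
  horizontal distance from the unshifted crossing to that abscissa.\<close>
definition diag_col :: "int \<Rightarrow> int \<Rightarrow> int \<Rightarrow> int" where
  "diag_col p q n = (n*q + (p+q) - 1) div (p+q)"

definition diag_gap :: "int \<Rightarrow> int \<Rightarrow> int \<Rightarrow> int" where
  "diag_gap p q n = diag_col p q n * (p+q) - n*q"

lemma diag_col_unique:
  assumes "0 < p+q" "(c-1)*(p+q) < n*q" "n*q \<le> c*(p+q)"
  shows "diag_col p q n = c"
  unfolding diag_col_def
  by (rule int_div_pos_eq[where r = "n*q + (p+q) - 1 - (p+q)*c"])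
    (use assms in \<open>simp_all add: algebra_simps\<close>)

lemma diag_col_bounds:
  assumes "0 < p+q"
  shows "(diag_col p q n - 1)*(p+q) < n*q" "n*q \<le> diag_col p q n * (p+q)"
proof -
  define a where "a = n*q + (p+q) - 1"
  have "a = (p+q) * (a div (p+q)) + a mod (p+q)" "0 \<le> a mod (p+q)" "a mod (p+q) < p+q"
    using assms by simp_all
  then show "(diag_col p q n - 1)*(p+q) < n*q" "n*q \<le> diag_col p q n * (p+q)"
    unfolding diag_col_def a_def[symmetric] unfolding a_def by (simp_all add: algebra_simps)
qed

lemma diag_gap_bounds:
  assumes "0 < p+q"
  shows "0 \<le> diag_gap p q n" "diag_gap p q n < p+q"
  using diag_col_bounds[OF assms, of n] by (simp_all add: diag_gap_def algebra_simps)

lemma diag_col_step: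
  assumes "0 \<le> p" "0 \<le> q" "0 < p+q"
  shows "diag_col p q n = diag_col p q (n-1) \<or> diag_col p q n = diag_col p q (n-1) + 1"
proof -
  define x where "x = diag_col p q n - diag_col p q (n-1)"
  have gap: "diag_gap p q n - diag_gap p q (n-1) = x * (p+q) - q"
    by (simp add: diag_gap_def x_def algebra_simps)
  define X where "X = x * (p+q)"
  have "X < 2 * (p+q)" "(-1) * (p+q) < X"
    using gap[folded X_def] diag_gap_bounds[OF assms(3), of n]
      diag_gap_bounds[OF assms(3), of "n-1"] assms
    by simp_all
  then have "x < 2" "-1 < x"
    unfolding X_def using assms(3) by (simp_all only: mult_less_cancel_right)
  then show ?thesis unfolding x_def by linarith
qed

lemma diag_col_small:
  assumes "0 < p" "0 < q"
  shows "diag_col p q (-1) = 0" "diag_col p q 0 = 0" "diag_col p q 1 = 1"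
  using assms by (auto intro: diag_col_unique)

lemma diag_col_range:
  assumes "0 < p" "0 < q" "0 \<le> n" "n < p+q"
  shows "0 \<le> diag_col p q n" "diag_col p q n \<le> n" "n - p < diag_col p q n" "diag_col p q n \<le> q"
proof -
  define c where "c = diag_col p q n"
  have N: "0 < p+q" using assms by simp
  have lo: "(c-1)*(p+q) < n*q" and hi: "n*q \<le> c*(p+q)"
    using diag_col_bounds[OF N, of n] by (simp_all add: c_def)
  have "0 \<le> n*q" "n*q \<le> n*(p+q)" "n*q < q*(p+q)"
    using assms by (simp_all add: mult_left_mono mult_strict_left_mono)
  then have "0 \<le> c*(p+q)" "(c-1)*(p+q) < n*(p+q)" "(c-1)*(p+q) < q*(p+q)" using lo hi by simp_all
  then show "0 \<le> diag_col p q n" "diag_col p q n \<le> n" "diag_col p q n \<le> q"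
    using N by (simp_all add: c_def zero_le_mult_iff mult_less_cancel_right)
  have "(n-p)*(p+q) = n*q - p*(p+q-n)" by (simp add: algebra_simps)
  also have "\<dots> < n*q" using assms by simp
  finally have "(n-p)*(p+q) < c*(p+q)" using hi by simp
  then show "n - p < diag_col p q n" using N by (simp add: c_def mult_less_cancel_right)
qed

text \<open>The segment to the mediant of a Farey pair \<open>a/b < c/d\<close> crosses the antidiagonals
  \<open>n \<le> a + b\<close> in the same columns as the segment to \<open>a/b\<close>, and the antidiagonal \<open>a + b + m\<close>
  \<open>b\<close> columns to the right of where the segment to \<open>c/d\<close> crosses the antidiagonal \<open>m\<close>.\<close>
lemma diag_col_mediant_left:
  fixes a b c d n :: int
  assumes det: "b*c = a*d + 1" and "1 \<le> a" "1 \<le> b" "1 \<le> c" "0 \<le> d" "-1 \<le> n" "n \<le> a+b"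
  shows "diag_col (a+c) (b+d) n = diag_col a b n \<and>
         (a+b) * diag_gap (a+c) (b+d) n = (a+b+c+d) * diag_gap a b n + n"
proof -
  define c0 where "c0 = diag_col a b n"
  define D where "D = c0*(a+b+c+d) - n*(b+d)"
  have key: "(a+b)*D = (a+b+c+d) * diag_gap a b n + n"
  proof -
    have "(a+b)*D - (a+b+c+d) * diag_gap a b n = n*(b*c - a*d)"
      by (simp add: D_def diag_gap_def c0_def algebra_simps)
    then show ?thesis using det by simp
  qed
  have "0 \<le> D" "D < a+b+c+d"
    using scaled_quotient_bounds[OF _ _ _ _ _ _ key] diag_gap_bounds[of a b n] assms by simp_all
  then have col: "diag_col (a+c) (b+d) n = c0"
    by (intro diag_col_unique) (simp_all add: D_def algebra_simps)
  then have "diag_gap (a+c) (b+d) n = D"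
    by (simp add: diag_gap_def D_def algebra_simps)
  then show ?thesis using col key by (simp add: c0_def)
qed

lemma diag_col_mediant_right:
  fixes a b c d m :: int
  assumes det: "b*c = a*d + 1" and "1 \<le> a" "1 \<le> b" "1 \<le> c" "0 \<le> d" "-1 \<le> m" "m \<le> c+d"
  shows "diag_col (a+c) (b+d) (a+b+m) = b + diag_col c d m \<and>
         (c+d) * diag_gap (a+c) (b+d) (a+b+m) = (a+b+c+d) * diag_gap c d m + (c+d) - m"
proof -
  define c0 where "c0 = diag_col c d m"
  define D where "D = (b+c0)*(a+b+c+d) - (a+b+m)*(b+d)"
  have key: "(c+d)*D = (a+b+c+d) * diag_gap c d m + (c+d-m)"
  proof -
    have "(c+d)*D - (a+b+c+d) * diag_gap c d m = (c+d-m)*(b*c - a*d)"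
      by (simp add: D_def diag_gap_def c0_def algebra_simps)
    then show ?thesis using det by simp
  qed
  have "0 \<le> D" "D < a+b+c+d"
    using scaled_quotient_bounds[OF _ _ _ _ _ _ key] diag_gap_bounds[of c d m] assms by simp_all
  then have col: "diag_col (a+c) (b+d) (a+b+m) = b + c0"
    by (intro diag_col_unique) (simp_all add: D_def algebra_simps)
  then have "diag_gap (a+c) (b+d) (a+b+m) = D"
    by (simp add: diag_gap_def D_def algebra_simps)
  then show ?thesis using col key by (simp add: c0_def)
qed

text \<open>The \<open>k\<close>-th crossed edge lies on the antidiagonal \<open>k div 2\<close> if \<open>k\<close> is odd, and between the
  antidiagonals \<open>k div 2 - 1\<close> and \<open>k div 2\<close> otherwise. \<open>letter_sign\<close> is twice the cross product of
  \<open>(q, p)\<close> with the midpoint of that edge.\<close>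
definition letter_type :: "int \<Rightarrow> int \<Rightarrow> nat \<Rightarrow> etype" where
  "letter_type p q k = (if odd k then Diag
     else if diag_col p q (int (k div 2)) = diag_col p q (int (k div 2) - 1) then Hor else Vert)"

definition letter_sign :: "int \<Rightarrow> int \<Rightarrow> nat \<Rightarrow> int" where
  "letter_sign p q k = (if odd k then (p+q) - 2 * diag_gap p q (int (k div 2))
     else if diag_col p q (int (k div 2)) = diag_col p q (int (k div 2) - 1)
     then p - 2 * diag_gap p q (int (k div 2))
     else q - 2 * diag_gap p q (int (k div 2) - 1))"

definition cutting_letter :: "int \<Rightarrow> int \<Rightarrow> nat \<Rightarrow> etype \<times> bool" where
  "cutting_letter p q k = (letter_type p q k, 0 < letter_sign p q k)"

definition cutting_word :: "int \<Rightarrow> int \<Rightarrow> (etype \<times> bool) list" where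
  "cutting_word p q = map (cutting_letter p q) [0..<nat (2*(p+q))]"

lemma length_cutting_word [simp]: "length (cutting_word p q) = nat (2*(p+q))"
  by (simp add: cutting_word_def)

lemma nth_cutting_word [simp]: "k < nat (2*(p+q)) \<Longrightarrow> cutting_word p q ! k = cutting_letter p q k"
  by (simp add: cutting_word_def)

lemma cutting_letter_small:
  assumes "0 < p" "0 < q"
  shows "cutting_letter p q 0 = (Hor, True)" "cutting_letter p q 1 = (Diag, True)"
    "cutting_letter p q 2 = (Vert, True)"
  using assms
  by (simp_all add: cutting_letter_def letter_type_def letter_sign_def diag_gap_def diag_col_small)

lemma letter_mediant_left:
  fixes a b c d :: int
  assumes det: "b*c = a*d + 1" and "1 \<le> a" "1 \<le> b" "1 \<le> c" "0 \<le> d" and k: "k < nat (2*(a+b))"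
  shows "letter_type (a+c) (b+d) k = letter_type a b k \<and>
         (a+b) * letter_sign (a+c) (b+d) k = (a+b+c+d) * letter_sign a b k - (int k - 1)"
proof -
  define n where "n = int (k div 2)"
  have "0 \<le> n" "n \<le> a+b" using k by (auto simp: n_def)
  then have A1: "diag_col (a+c) (b+d) n = diag_col a b n \<and>
      (a+b) * diag_gap (a+c) (b+d) n = (a+b+c+d) * diag_gap a b n + n"
    and A2: "diag_col (a+c) (b+d) (n-1) = diag_col a b (n-1) \<and>
      (a+b) * diag_gap (a+c) (b+d) (n-1) = (a+b+c+d) * diag_gap a b (n-1) + (n-1)"
    using diag_col_mediant_left[OF assms(1-5)] by auto
  have type: "letter_type (a+c) (b+d) k = letter_type a b k"
    using A1 A2 by (simp add: letter_type_def n_def[symmetric])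
  consider "odd k" | "even k" "diag_col a b n = diag_col a b (n-1)"
    | "even k" "diag_col a b n \<noteq> diag_col a b (n-1)" by blast
  then show ?thesis
  proof cases
    case 1
    then have "int k = 2*n + 1" by (simp add: n_def) presburger
    then show ?thesis using type 1 A1
      by (simp add: letter_sign_def n_def[symmetric] algebra_simps)
  next
    case 2
    have "int k = 2*n" using 2 by (simp add: n_def) presburger
    moreover have "(a+b)*(a+c) - (a+b+c+d)*a = 1" using det by (simp add: algebra_simps)
    ultimately show ?thesis using type 2 A1 A2
      by (simp add: letter_sign_def n_def[symmetric] algebra_simps)
  next
    case 3
    have "int k = 2*n" using 3 by (simp add: n_def) presburger
    moreover have "(a+b)*(b+d) - (a+b+c+d)*b = -1" using det by (simp add: algebra_simps)
    ultimately show ?thesis using type 3 A1 A2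
      by (simp add: letter_sign_def n_def[symmetric] algebra_simps)
  qed
qed

lemma letter_mediant_right:
  fixes a b c d :: int
  assumes det: "b*c = a*d + 1" and "1 \<le> a" "1 \<le> b" "1 \<le> c" "0 \<le> d" and k: "k < nat (2*(c+d))"
  defines "k' \<equiv> nat (2*(a+b)) + k"
  shows "letter_type (a+c) (b+d) k' = letter_type c d k \<and>
         (c+d) * letter_sign (a+c) (b+d) k' = (a+b+c+d) * letter_sign c d k + (int k - 1 - 2*(c+d))"
proof -
  define m where "m = int (k div 2)"
  have "0 \<le> m" "m \<le> c+d" using k by (auto simp: m_def)
  then have B1: "diag_col (a+c) (b+d) (a+b+m) = b + diag_col c d m \<and>
      (c+d) * diag_gap (a+c) (b+d) (a+b+m) = (a+b+c+d) * diag_gap c d m + (c+d) - m"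
    and B2: "diag_col (a+c) (b+d) (a+b+(m-1)) = b + diag_col c d (m-1) \<and>
      (c+d) * diag_gap (a+c) (b+d) (a+b+(m-1)) = (a+b+c+d) * diag_gap c d (m-1) + (c+d) - (m-1)"
    using diag_col_mediant_right[OF assms(1-5)] by auto
  have double: "nat (2*(a+b)) = 2 * nat (a+b)" by (simp add: nat_mult_distrib)
  have half: "int (k' div 2) = a+b+m" and parity: "odd k' \<longleftrightarrow> odd k"
    using assms(2,3) unfolding k'_def double by (simp_all add: m_def)
  have shift: "a+b+m-1 = a+b+(m-1)" by simp
  have type: "letter_type (a+c) (b+d) k' = letter_type c d k"
    using B1 B2 parity unfolding letter_type_def half shift by (simp add: m_def[symmetric])
  consider "odd k" | "even k" "diag_col c d m = diag_col c d (m-1)"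
    | "even k" "diag_col c d m \<noteq> diag_col c d (m-1)" by blast
  then show ?thesis
  proof cases
    case 1
    then have "int k = 2*m + 1" by (simp add: m_def) presburger
    then show ?thesis using type 1 B1 parity
      unfolding letter_sign_def half by (simp add: m_def[symmetric] algebra_simps)
  next
    case 2
    have "int k = 2*m" using 2 by (simp add: m_def) presburger
    moreover have "(c+d)*(a+c) - (a+b+c+d)*c = -1" using det by (simp add: algebra_simps)
    ultimately show ?thesis using type 2 B1 B2 parity
      unfolding letter_sign_def half shift by (simp add: m_def[symmetric] algebra_simps)
  next
    case 3
    have "int k = 2*m" using 3 by (simp add: m_def) presburger
    moreover have "(c+d)*(b+d) - (a+b+c+d)*d = 1" using det by (simp add: algebra_simps)
    ultimately show ?thesis using type 3 B1 B2 parity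
      unfolding letter_sign_def half shift by (simp add: m_def[symmetric] algebra_simps)
  qed
qed

definition center_type :: "int \<Rightarrow> int \<Rightarrow> etype" where
  "center_type p q = (if even p then Hor else if even q then Vert else Diag)"

text \<open>The midpoint \<open>(q/2, p/2)\<close> of the segment is the midpoint of its crossed edge of index
  \<open>p + q + 1\<close>, whose type is read off from the parities of \<open>p\<close> and \<open>q\<close>.\<close>
lemma cutting_letter_center:
  assumes "coprime p q" "0 < p" "0 < q"
  defines "k \<equiv> nat (p+q) + 1"
  shows "letter_sign p q k = 0" "letter_type p q k = center_type p q"
proof -
  have k: "int k = p + q + 1" using assms by (simp add: k_def)
  have "\<not> (even p \<and> even q)"
    using assms(1) coprime_common_divisor[of p q 2] by auto
  then consider "odd p" "odd q" | "even p" "odd q" | "odd p" "even q" by blast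
  then have "letter_sign p q k = 0 \<and> letter_type p q k = center_type p q"
  proof cases
    case 1
    then obtain a b where ab: "p = 2*a+1" "q = 2*b+1" by (meson oddE)
    have "odd k" "int (k div 2) = a+b+1" using k ab by presburger+
    moreover have "diag_col p q (a+b+1) = b+1"
      using ab assms by (intro diag_col_unique) (simp_all add: algebra_simps)
    ultimately show ?thesis using ab 1
      by (simp add: letter_sign_def letter_type_def center_type_def diag_gap_def algebra_simps)
  next
    case 2
    then obtain a b where ab: "p = 2*a" "q = 2*b+1" by (meson evenE oddE)
    have "even k" "int (k div 2) = a+b+1" using k ab by presburger+
    moreover have "diag_col p q (a+b+1) = b+1" "diag_col p q (a+b+1-1) = b+1"
      using ab assms by (intro diag_col_unique; simp add: algebra_simps)+
    ultimately show ?thesis using ab 2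
      by (simp add: letter_sign_def letter_type_def center_type_def diag_gap_def algebra_simps)
  next
    case 3
    then obtain a b where ab: "p = 2*a+1" "q = 2*b" by (meson evenE oddE)
    have "even k" "int (k div 2) = a+b+1" using k ab by presburger+
    moreover have "diag_col p q (a+b+1) = b+1" "diag_col p q (a+b+1-1) = b"
      using ab assms by (intro diag_col_unique; simp add: algebra_simps)+
    ultimately show ?thesis using ab 3
      by (simp add: letter_sign_def letter_type_def center_type_def diag_gap_def algebra_simps)
  qed
  then show "letter_sign p q k = 0" "letter_type p q k = center_type p q" by simp_all
qed


lemma letter_sign_mod: "(p+q) dvd (letter_sign p q k - (int k - 1) * q)"
proof -
  define n where "n = int (k div 2)"
  have "letter_sign p q k - (int k - 1) * q =
    (p+q) * (if odd k \<or> diag_col p q n = diag_col p q (n-1) then 1 - 2 * diag_col p q n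
             else - 2 * diag_col p q (n-1))"
  proof (cases "odd k")
    case True
    then have "int k = 2*n + 1" by (simp add: n_def) presburger
    then show ?thesis using True
      by (simp add: letter_sign_def diag_gap_def n_def[symmetric] algebra_simps)
  next
    case False
    then have "int k = 2*n" by (simp add: n_def) presburger
    then show ?thesis using False
      by (simp add: letter_sign_def diag_gap_def n_def[symmetric] algebra_simps)
  qed
  then show ?thesis by (metis dvd_triv_left)
qed

text \<open>Since \<open>letter_sign p q k \<equiv> (k - 1) q (mod p + q)\<close>, the sign vanishes only at the centre.\<close>
lemma letter_sign_eq_0_iff:
  assumes "coprime p q" "0 < p" "0 < q" "k < nat (2*(p+q))"
  shows "letter_sign p q k = 0 \<longleftrightarrow> k = nat (p+q) + 1"
proof
  assume zero: "letter_sign p q k = 0"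
  have "coprime (p+q) q"
    using assms(1) by (simp add: coprime_iff_gcd_eq_1)
  moreover have "(p+q) dvd (int k - 1) * q"
    using letter_sign_mod[of p q k] zero by simp
  ultimately have "(p+q) dvd (int k - 1)"
    by (simp add: coprime_commute coprime_dvd_mult_left_iff)
  then obtain t where t: "int k - 1 = (p+q) * t" by blast
  have N: "2 \<le> p+q" using assms by simp
  have "(p+q) * (-1) < (p+q) * t" "(p+q) * t < (p+q) * 2"
    using t assms by simp_all
  then have "-1 < t" "t < 2" using N by (simp_all only: mult_less_cancel_left_pos)
  then consider "t = 0" | "t = 1" by linarith
  then show "k = nat (p+q) + 1"
  proof cases
    case 1
    then have "k = 1" using t by simp
    then show ?thesis using zero cutting_letter_small(2)[OF assms(2,3)] by (simp add: cutting_letter_def)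
  next
    case 2
    then have "int k = p + q + 1" using t by simp
    then show ?thesis using assms(2,3) by arith
  qed
next
  assume "k = nat (p+q) + 1"
  then show "letter_sign p q k = 0" using cutting_letter_center(1)[OF assms(1-3)] by simp
qed

lemma diag_col_reflect:
  assumes "coprime p q" "0 < p" "0 < q" "0 < n" "n < p+q" "m + n = p + q"
  shows "diag_col p q m = q - diag_col p q n + 1"
    and "diag_gap p q m = (p+q) - diag_gap p q n"
proof -
  have "diag_gap p q n \<noteq> 0"
  proof
    assume "diag_gap p q n = 0"
    then have "n * q = (p+q) * diag_col p q n" by (simp add: diag_gap_def algebra_simps)
    then have "(p+q) dvd n * q" by simp
    moreover have "coprime (p+q) q" using assms(1) by (simp add: coprime_iff_gcd_eq_1)
    ultimately have "(p+q) dvd n" by (simp add: coprime_commute coprime_dvd_mult_left_iff)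
    then show False using assms(4,5) by (simp add: zdvd_not_zless)
  qed
  then have "0 < diag_gap p q n" "diag_gap p q n < p+q"
    using diag_gap_bounds[of p q n] assms(2,3) by simp_all
  moreover have m: "m = p + q - n" using assms(6) by simp
  ultimately show col: "diag_col p q m = q - diag_col p q n + 1"
    by (intro diag_col_unique) (use assms in \<open>simp_all add: m diag_gap_def algebra_simps\<close>)
  show "diag_gap p q m = (p+q) - diag_gap p q n"
    unfolding diag_gap_def col by (simp add: m algebra_simps)
qed

text \<open>The point reflection in \<open>(q/2, p/2)\<close> preserves the modified lattice and the segment,
  but exchanges its two sides.\<close>
lemma letter_reflect:
  assumes cop: "coprime p q" and "0 < p" "0 < q" "3 \<le> k" "int k \<le> p+q"
  defines "k' \<equiv> nat (2*(p+q)+2) - k"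
  shows "letter_type p q k' = letter_type p q k \<and> letter_sign p q k' = - letter_sign p q k"
proof -
  define n where "n = int (k div 2)"
  note reflect = diag_col_reflect[OF assms(1-3)]
  have k': "int k' = 2*(p+q) + 2 - int k" using assms by (simp add: k'_def)
  consider "odd k" | "even k" "diag_col p q n = diag_col p q (n-1)"
    | "even k" "diag_col p q n \<noteq> diag_col p q (n-1)" by blast
  then show ?thesis
  proof cases
    case 1
    then have "int k = 2*n + 1" by (simp add: n_def) presburger
    then have "odd k'" "int (k' div 2) + n = p+q" "0 < n" "n < p+q"
      using k' assms(4,5) by simp_all presburger+
    then show ?thesis using 1 reflect(2)[of n "int (k' div 2)"]
      by (simp add: letter_type_def letter_sign_def n_def[symmetric])
  next
    case 2
    then have "int k = 2*n" by (simp add: n_def) presburger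
    then have "even k'" "int (k' div 2) + (n-1) = p+q" "int (k' div 2) - 1 + n = p+q" "1 < n" "n < p+q"
      using k' assms(4,5) by simp_all presburger+
    moreover have "diag_gap p q (n-1) = diag_gap p q n + q"
      using 2 by (simp add: diag_gap_def algebra_simps)
    ultimately show ?thesis using 2 reflect[of n "int (k' div 2) - 1"] reflect[of "n-1" "int (k' div 2)"]
      by (simp add: letter_type_def letter_sign_def n_def[symmetric])
  next
    case 3
    then have "int k = 2*n" by (simp add: n_def) presburger
    then have "even k'" "int (k' div 2) + (n-1) = p+q" "int (k' div 2) - 1 + n = p+q" "1 < n" "n < p+q"
      using k' assms(4,5) by simp_all presburger+
    moreover have "diag_gap p q n = diag_gap p q (n-1) + p"
      using 3 diag_col_step[of p q n] assms(2,3) by (simp add: diag_gap_def algebra_simps)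
    ultimately show ?thesis using 3 reflect[of n "int (k' div 2) - 1"] reflect[of "n-1" "int (k' div 2)"]
      by (simp add: letter_type_def letter_sign_def n_def[symmetric])
  qed
qed

lemma cutting_letter_reflect:
  assumes "coprime p q" "0 < p" "0 < q" "3 \<le> k" "int k \<le> p+q"
  shows "cutting_letter p q (nat (2*(p+q)+2) - k) = letter_inv (cutting_letter p q k)"
proof -
  have "letter_sign p q k \<noteq> 0" using letter_sign_eq_0_iff[OF assms(1-3), of k] assms by auto
  then show ?thesis
    using letter_reflect[OF assms] by (auto simp: cutting_letter_def letter_inv_def)
qed

abbreviation xyz_word :: "(etype \<times> bool) list" where
  "xyz_word \<equiv> [(Hor, True), (Diag, True), (Vert, True)]"

text \<open>By the reflection symmetry the cutting word has the shape \<open>x y z u \<ell> u\<^sup>-\<^sup>1\<close>, with \<open>\<ell>\<close> the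
  central letter.\<close>
lemma word_matrix_cutting_word_delete_center:
  assumes "coprime p q" "0 < p" "0 < q"
  defines "W \<equiv> cutting_word p q" and "i \<equiv> nat (p+q) + 1"
  shows "word_matrix k \<sigma> (take i W @ drop (Suc i) W) = word_matrix k \<sigma> xyz_word"
proof -
  define U where "U = drop 3 (take i W)"
  have i: "3 \<le> i" "length W = 2*i - 2" using assms(2,3) by (simp_all add: W_def i_def)
  have "take 3 W = xyz_word"
    using i cutting_letter_small[OF assms(2,3)] unfolding W_def
    by (intro nth_equalityI) (auto simp: less_Suc_eq numeral_3_eq_3 numeral_2_eq_2)
  then have take: "take i W = xyz_word @ U"
    using i by (metis U_def append_take_drop_id min.absorb1 take_take)
  have "drop (Suc i) W = rev (map letter_inv U)"
  proof (rule nth_equalityI)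
    show "length (drop (Suc i) W) = length (rev (map letter_inv U))"
      using i by (simp add: U_def)
  next
    fix j assume "j < length (drop (Suc i) W)"
    then have j: "j < i - 3" using i by simp
    have "rev (map letter_inv U) ! j = letter_inv (W ! (i - 1 - j))"
      using i j by (simp add: U_def rev_nth)
    also have "\<dots> = letter_inv (cutting_letter p q (i - 1 - j))"
      using i j by (simp add: W_def)
    also have "\<dots> = cutting_letter p q (nat (2*(p+q)+2) - (i - 1 - j))"
      using i j assms(2,3)
      by (intro cutting_letter_reflect[OF assms(1-3), symmetric]) (simp_all add: i_def)
    also have "nat (2*(p+q)+2) - (i - 1 - j) = Suc i + j"
      using i j assms(2,3) by (simp add: i_def)
    also have "cutting_letter p q (Suc i + j) = W ! (Suc i + j)"
      using i j by (simp add: W_def)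
    finally show "drop (Suc i) W ! j = rev (map letter_inv U) ! j"
      using i j by simp
  qed
  then show ?thesis
    by (simp add: take word_matrix_append word_matrix_mult_rev_inv m2_mult_assoc)
qed

lemma word_matrix_add_cutting_word:
  assumes "coprime p q" "0 < p" "0 < q"
  defines "W \<equiv> cutting_word p q" and "i \<equiv> nat (p+q) + 1"
  shows "m2_add (word_matrix k \<sigma> (W[i := (center_type p q, True)])) (word_matrix k \<sigma> W) =
    m2_smult (m2_trace (letter_matrix k \<sigma> (center_type p q, True))) (word_matrix k \<sigma> xyz_word)"
proof -
  define A where "A = W[i := (center_type p q, True)]"
  have i: "i < length W" using assms(2,3) by (simp add: W_def i_def)
  have "W ! i = (center_type p q, False)"
    using i cutting_letter_center[OF assms(1-3)] by (simp add: W_def i_def cutting_letter_def)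
  then have "A[i := letter_inv (A ! i)] = W"
    using i by (simp add: A_def letter_inv_def list_update_same_conv)
  moreover have "take i A @ drop (Suc i) A = take i W @ drop (Suc i) W"
    by (simp add: A_def)
  ultimately show ?thesis
    using word_matrix_add_invert_letter[of i A k \<sigma>] i
      word_matrix_cutting_word_delete_center[OF assms(1-3)]
    by (simp add: A_def W_def i_def)
qed

lemma nth_cutting_word_update_center:
  assumes "coprime p q" "0 < p" "0 < q" "j < nat (2*(p+q))"
    and "0 < N" "0 < M" "-(M+N) < r" "r < N" "N * letter_sign p q j = M * S + r"
    and "j = nat (p+q) + 1 \<Longrightarrow> r = -M"
  shows "(cutting_word p q)[nat (p+q) + 1 := (center_type p q, True)] ! j =
    (letter_type p q j, 0 < S)"
proof (cases "j = nat (p+q) + 1")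
  case True
  then have "M * S = M * 1" using assms cutting_letter_center(1)[OF assms(1-3)] by simp
  then have "S = 1" using assms(6) by (simp only: mult_cancel_left) simp
  then show ?thesis using True assms cutting_letter_center(2)[OF assms(1-3)] by simp
next
  case False
  then have "letter_sign p q j \<noteq> 0" using letter_sign_eq_0_iff[OF assms(1-4)] by simp
  then have "0 < letter_sign p q j \<longleftrightarrow> 0 < S"
    using assms(5-9) by (intro pos_iff_pos_of_scaled) simp_all
  then show ?thesis using False assms(4) by (simp add: cutting_letter_def)
qed

lemma cutting_word_mediant:
  fixes a b c d :: int
  assumes det: "b*c = a*d + 1" and "1 \<le> a" "1 \<le> b" "1 \<le> c" "0 \<le> d"
  shows "cutting_word a b @ cutting_word c d =
    (cutting_word (a+c) (b+d))[nat (a+c+(b+d)) + 1 := (center_type (a+c) (b+d), True)]"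
proof (rule nth_equalityI)
  note update = nth_cutting_word_update_center[OF coprime_mediant[OF det]]
  show "length (cutting_word a b @ cutting_word c d) = length ((cutting_word (a+c) (b+d))
      [nat (a+c+(b+d)) + 1 := (center_type (a+c) (b+d), True)])"
    using assms by simp
  fix j assume "j < length (cutting_word a b @ cutting_word c d)"
  then have j: "j < nat (2*(a+b)) + nat (2*(c+d))" by simp
  show "(cutting_word a b @ cutting_word c d) ! j = (cutting_word (a+c) (b+d))
      [nat (a+c+(b+d)) + 1 := (center_type (a+c) (b+d), True)] ! j"
  proof (cases "j < nat (2*(a+b))")
    case True
    note L = letter_mediant_left[OF assms True]
    have "(cutting_word (a+c) (b+d))[nat (a+c+(b+d)) + 1 := (center_type (a+c) (b+d), True)] ! j
        = (letter_type (a+c) (b+d) j, 0 < letter_sign a b j)"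
      by (rule update[where N = "a+b" and M = "a+b+c+d" and r = "1 - int j"])
        (use L assms j True in \<open>simp_all add: algebra_simps\<close>)
    then show ?thesis using True L by (simp add: nth_append cutting_letter_def)
  next
    case False
    define j' where "j' = j - nat (2*(a+b))"
    have j': "j = nat (2*(a+b)) + j'" "j' < nat (2*(c+d))" using False j by (simp_all add: j'_def)
    note R = letter_mediant_right[OF assms j'(2), folded j'(1)]
    have "(cutting_word (a+c) (b+d))[nat (a+c+(b+d)) + 1 := (center_type (a+c) (b+d), True)] ! j
        = (letter_type (a+c) (b+d) j, 0 < letter_sign c d j')"
      by (rule update[where N = "c+d" and M = "a+b+c+d" and r = "int j' - 1 - 2*(c+d)"])
        (use R assms j' in \<open>simp_all add: algebra_simps\<close>)
    then show ?thesis using j' R by (simp add: nth_append cutting_letter_def)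
  qed
qed

lemma cutting_letter_one:
  assumes "0 \<le> q" "1 \<le> k" "k < nat (2*(1+q))"
  shows "letter_type 1 q k = (if odd k then Diag else Vert)" "letter_sign 1 q k = q + 2 - int k"
proof -
  define m where "m = int (k div 2)"
  have col: "diag_col 1 q m' = m'" if "0 \<le> m'" "m' \<le> q" for m'
    using that by (intro diag_col_unique) (simp_all add: algebra_simps)
  have "0 \<le> m" "m \<le> q" using assms by (auto simp: m_def)
  moreover have "odd k \<Longrightarrow> int k = 2*m + 1" "even k \<Longrightarrow> int k = 2*m" "even k \<Longrightarrow> 1 \<le> m"
    using assms(2) by (simp_all add: m_def) presburger+
  ultimately show "letter_type 1 q k = (if odd k then Diag else Vert)" "letter_sign 1 q k = q + 2 - int k"
    by (auto simp: letter_type_def letter_sign_def diag_gap_def m_def[symmetric] col)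
      (auto simp: algebra_simps)
qed

lemma cutting_word_one_succ:
  fixes n :: int
  assumes "1 \<le> n"
  shows "xyz_word @ drop 1 (cutting_word 1 n) =
    (cutting_word 1 (n+1))[nat (1+(n+1)) + 1 := (center_type 1 (n+1), True)]"
proof (rule nth_equalityI)
  note update = nth_cutting_word_update_center[of 1 "n+1"]
  show "length (xyz_word @ drop 1 (cutting_word 1 n)) =
    length ((cutting_word 1 (n+1))[nat (1+(n+1)) + 1 := (center_type 1 (n+1), True)])"
    using assms by simp
  fix j assume "j < length (xyz_word @ drop 1 (cutting_word 1 n))"
  then have j: "j < nat (2*(1+(n+1)))" using assms by simp
  show "(xyz_word @ drop 1 (cutting_word 1 n)) ! j =
    (cutting_word 1 (n+1))[nat (1+(n+1)) + 1 := (center_type 1 (n+1), True)] ! j"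
  proof (cases "j < 3")
    case True
    then have "j \<noteq> nat (1+(n+1)) + 1" using assms by simp
    then show ?thesis
      using True j cutting_letter_small[of 1 "n+1"] assms
      by (auto simp: nth_append less_Suc_eq numeral_3_eq_3 numeral_2_eq_2)
  next
    case False
    have "(xyz_word @ drop 1 (cutting_word 1 n)) ! j = cutting_letter 1 n (j-2)"
      using False j assms by (simp add: nth_append) (simp add: numeral_2_eq_2 Suc_diff_Suc)
    moreover have "(cutting_word 1 (n+1))[nat (1+(n+1)) + 1 := (center_type 1 (n+1), True)] ! j
        = (letter_type 1 (n+1) j, 0 < letter_sign 1 n (j-2))"
      by (rule update[where N = 1 and M = 1 and r = "-1"])
        (use False j assms cutting_letter_one[of "n+1" j] cutting_letter_one[of n "j-2"] in simp_all)
    ultimately show ?thesis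
      using False j assms cutting_letter_one[of "n+1" j] cutting_letter_one[of n "j-2"]
      by (simp add: cutting_letter_def)
  qed
qed

lemma word_matrix_mediant:
  fixes a b c d :: int
  assumes "b*c = a*d + 1" "1 \<le> a" "1 \<le> b" "1 \<le> c" "0 \<le> d"
  shows "m2_add (m2_mult (word_matrix k \<sigma> (cutting_word a b)) (word_matrix k \<sigma> (cutting_word c d)))
      (word_matrix k \<sigma> (cutting_word (a+c) (b+d))) =
    m2_smult (m2_trace (letter_matrix k \<sigma> (center_type (a+c) (b+d), True))) (word_matrix k \<sigma> xyz_word)"
proof -
  have "m2_mult (word_matrix k \<sigma> (cutting_word a b)) (word_matrix k \<sigma> (cutting_word c d))
      = word_matrix k \<sigma> (cutting_word a b @ cutting_word c d)"
    by (simp add: word_matrix_append)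
  then show ?thesis
    using word_matrix_add_cutting_word[of "a+c" "b+d" k \<sigma>] cutting_word_mediant[OF assms]
      coprime_mediant[OF assms(1)] assms
    by simp
qed

lemma word_matrix_one_succ:
  fixes n :: int
  assumes "1 \<le> n"
  shows "m2_add (m2_mult (word_matrix k \<sigma> (xyz_word @ [(Hor, False)])) (word_matrix k \<sigma> (cutting_word 1 n)))
      (word_matrix k \<sigma> (cutting_word 1 (n+1))) =
    m2_smult (m2_trace (letter_matrix k \<sigma> (center_type 1 (n+1), True))) (word_matrix k \<sigma> xyz_word)"
proof -
  have len: "0 < length (cutting_word 1 n)" using assms by simp
  then have "cutting_word 1 n ! 0 = (Hor, True)"
    using assms cutting_letter_small(1)[of 1 n] by simp
  then have "cutting_word 1 n = (Hor, True) # drop 1 (cutting_word 1 n)"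
    by (metis Cons_nth_drop_Suc One_nat_def drop0 len)
  then have "word_matrix k \<sigma> (cutting_word 1 n) =
      m2_mult (Xm k \<sigma>) (word_matrix k \<sigma> (drop 1 (cutting_word 1 n)))"
    by (metis letter_matrix.simps(1) word_matrix_Cons)
  then have "m2_mult (word_matrix k \<sigma> (xyz_word @ [(Hor, False)])) (word_matrix k \<sigma> (cutting_word 1 n))
      = word_matrix k \<sigma> (xyz_word @ drop 1 (cutting_word 1 n))"
    by (simp add: word_matrix_append m2_mult_assoc m2_mult_adj_left det_XYZ
        flip: m2_mult_assoc[of "m2_adj (Xm k \<sigma>)"])
  then have "m2_add (m2_mult (word_matrix k \<sigma> (xyz_word @ [(Hor, False)]))
      (word_matrix k \<sigma> (cutting_word 1 n))) (word_matrix k \<sigma> (cutting_word 1 (n+1))) =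
    m2_add (word_matrix k \<sigma> ((cutting_word 1 (n+1))[nat (1+(n+1)) + 1 := (center_type 1 (n+1), True)]))
      (word_matrix k \<sigma> (cutting_word 1 (n+1)))"
    by (simp only: cutting_word_one_succ[OF assms])
  also have "\<dots> = m2_smult (m2_trace (letter_matrix k \<sigma> (center_type 1 (n+1), True)))
      (word_matrix k \<sigma> xyz_word)"
    by (rule word_matrix_add_cutting_word) (use assms in simp_all)
  finally show ?thesis .
qed

section \<open>The Farey tree\<close>

fun map_triple :: "('a \<Rightarrow> 'b) \<Rightarrow> 'a \<times> 'a \<times> 'a \<Rightarrow> 'b \<times> 'b \<times> 'b" where
  "map_triple f (r, t, s) = (f r, f t, f s)"

lemma farey_vertex_mediant:
  "\<exists>a b c d. farey_vertex w = ((a,b), (a+c,b+d), (c,d)) \<and> b*c = a*d + 1 \<and> 0 < b \<and> 0 < c"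
proof (induction w)
  case Nil
  show ?case by (simp add: mediant_def)
next
  case (Cons dir w)
  then obtain a b c d where "farey_vertex w = ((a,b), (a+c,b+d), (c,d))" "b*c = a*d + 1" "0 < b" "0 < c"
    by blast
  then show ?case
    by (cases dir) (force simp: mediant_def algebra_simps)+
qed

text \<open>The index \<open>1, 2, 3\<close> of the central letter \<open>x, y, z\<close> of the word of \<open>a/b\<close>.\<close>
definition center_index :: "frac \<Rightarrow> nat" where
  "center_index x = (if even (fst x) then 1 else if even (snd x) then 3 else 2)"

lemma center_index_mediant_mediant:
  "center_index (a + (a+c), b + (b+d)) = center_index (c, d)"
  "center_index (a+c+c, b+d+d) = center_index (a, b)"
  by (simp_all add: center_index_def even_add)

lemma gm_vertex_labels:
  "map_triple snd (gm_vertex k \<sigma> w) = map_triple (\<sigma> \<circ> center_index) (farey_vertex w)"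
proof (induction w)
  case Nil
  show ?case by (simp add: center_index_def)
next
  case (Cons dir w)
  obtain a b c d where F: "farey_vertex w = ((a,b), (a+c,b+d), (c,d))"
    using farey_vertex_mediant by blast
  obtain m1 h m2 i m3 j where G: "gm_vertex k \<sigma> w = ((m1,h), (m2,i), (m3,j))"
    by (metis prod.exhaust)
  then show ?case using Cons.IH F G by (simp add: mediant_def center_index_mediant_mediant)
qed

text \<open>If \<open>a/b < p/q < c/d\<close> for a Farey pair, then \<open>(p, q) = u (c, d) + v (a, b)\<close> with \<open>u, v \<ge> 1\<close>.\<close>
lemma farey_interval_height:
  fixes a b c d p q :: nat
  assumes "b*c = a*d + 1" "a*q < b*p" "d*p < c*q"
  shows "a + b + c + d \<le> p + q"
proof -
  define u where "u = int b * int p - int a * int q"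
  define v where "v = int c * int q - int d * int p"
  have "int b * int c = int a * int d + 1" "1 \<le> u" "1 \<le> v"
    using assms unfolding u_def v_def by (simp_all flip: of_nat_mult of_nat_add)
  moreover have "u * int (c+d) + v * int (a+b) = int (p+q) * (int b * int c - int a * int d)"
    by (simp add: u_def v_def algebra_simps)
  moreover have "int (c+d) \<le> u * int (c+d)" "int (a+b) \<le> v * int (a+b)"
    using calculation(2,3) by (simp_all add: mult_le_cancel_right1)
  ultimately show ?thesis by simp
qed

lemma farey_vertex_exists_between:
  assumes "coprime p q" "0 < p"
    and "farey_vertex w = ((a,b), (a+c,b+d), (c,d))" "a*q < b*p" "d*p < c*q"
  shows "\<exists>w'. fst (snd (farey_vertex w')) = (p,q)"
  using assms(3-)
proof (induction "p + q - (a+b+c+d)" arbitrary: w a b c d rule: less_induct)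
  case less
  obtain a' b' c' d' where "farey_vertex w = ((a',b'), (a'+c',b'+d'), (c',d'))"
    "b'*c' = a'*d' + 1" "0 < b'" "0 < c'"
    using farey_vertex_mediant by blast
  then have det: "b*c = a*d + 1" and "0 < b" "0 < c" using less.prems(1) by auto
  have det_left: "b*(a+c) = a*(b+d) + 1" and det_right: "(b+d)*c = (a+c)*d + 1"
    using det by (simp_all add: algebra_simps)
  consider "(b+d)*p = (a+c)*q" | "(a+c)*q < (b+d)*p" | "(b+d)*p < (a+c)*q" by linarith
  then show ?case
  proof cases
    case 1
    have "int b * int c = int a * int d + 1" using det by (metis of_nat_1 of_nat_add of_nat_mult)
    then have "coprime (a+c) (b+d)"
      using coprime_mediant[of "int b" "int c" "int a" "int d"] by (metis coprime_int_iff of_nat_add)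
    then have "(a+c, b+d) = (p,q)" using coprime_cross_mult_eq[OF assms(1) _ 1 assms(2)] by simp
    then show ?thesis using less.prems(1) by (metis fst_conv snd_conv)
  next
    case 2
    have "(a+c) + (b+d) + c + d \<le> p + q"
      using farey_interval_height[OF det_right 2 less.prems(3)] .
    then show ?thesis
      using less.hyps[of "a+c" "b+d" c d "False # w"] less.prems 2 \<open>0 < c\<close>
      by (simp add: mediant_def)
  next
    case 3
    have "a + b + (a+c) + (b+d) \<le> p + q"
      using farey_interval_height[OF det_left less.prems(2) 3] .
    then show ?thesis
      using less.hyps[of a b "a+c" "b+d" "True # w"] less.prems 3 \<open>0 < b\<close>
      by (simp add: mediant_def)
  qed
qed

lemma farey_vertex_exists:
  assumes "coprime p q" "0 < p" "0 < q"
  shows "\<exists>w. fst (snd (farey_vertex w)) = (p,q)"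
  by (rule farey_vertex_exists_between[OF assms(1,2), of "[]" 0 1 1 0])
    (use assms in \<open>simp_all add: mediant_def\<close>)

section \<open>The Cohn recursion for the words\<close>

definition cohn_conj :: "m2 \<Rightarrow> m2" where
  "cohn_conj A = m2_mult (M2 (-1) 0 0 1) (m2_mult A (M2 1 0 0 (-1)))"

text \<open>The slope \<open>0/1\<close> lies outside the range of the theorem and keeps its given Cohn matrix,
  which is the conjugated matrix of \<open>x y z x\<^sup>-\<^sup>1\<close> (\<open>C01_eq\<close>).\<close>
definition word_cohn :: "(nat \<Rightarrow> int) \<Rightarrow> (nat \<Rightarrow> nat) \<Rightarrow> frac \<Rightarrow> m2" where
  "word_cohn k \<sigma> x = (if x = (0,1) then C01 k \<sigma>
     else cohn_conj (word_matrix k \<sigma> (cutting_word (int (fst x)) (int (snd x)))))"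

lemma trace_center_letter:
  "m2_trace (letter_matrix k \<sigma> (center_type (int p) (int q), True)) = - k (\<sigma> (center_index (p,q)))"
  by (simp add: center_type_def center_index_def Xm_def Ym_def Zm_def even_of_nat_iff)

lemma word_matrix_xyz: "word_matrix k \<sigma> xyz_word = M2 (-1) (3 + k (\<sigma> 1) + k (\<sigma> 2) + k (\<sigma> 3)) 0 (-1)"
  by (simp add: Xm_def Ym_def Zm_def m2_one_def algebra_simps)

locale cohn_params =
  fixes k :: "nat \<Rightarrow> int" and \<sigma> :: "nat \<Rightarrow> nat"
  assumes Kc_eq: "Kc k = 3 + k (\<sigma> 1) + k (\<sigma> 2) + k (\<sigma> 3)"
begin

lemma cohn_conj_recursion:
  assumes "m2_add (m2_mult A B) C = m2_smult (- k l) (word_matrix k \<sigma> xyz_word)"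
  shows "cohn_conj C = m2_minus (m2_mult (cohn_conj A) (cohn_conj B)) (Dmat k l)"
proof -
  obtain a1 a2 a3 a4 b1 b2 b3 b4 c1 c2 c3 c4
    where "A = M2 a1 a2 a3 a4" "B = M2 b1 b2 b3 b4" "C = M2 c1 c2 c3 c4"
    by (metis m2.exhaust)
  then show ?thesis
    using assms[unfolded word_matrix_xyz] by (simp add: cohn_conj_def Dmat_def Kc_eq algebra_simps)
qed

lemma C01_eq: "C01 k \<sigma> = cohn_conj (word_matrix k \<sigma> (xyz_word @ [(Hor, False)]))"
  by (simp add: C01_def cohn_conj_def Kc_eq Xm_def Ym_def Zm_def m2_one_def algebra_simps)

lemma word_cohn_mediant:
  fixes a b c d :: nat
  assumes det: "b * c = a * d + 1" and "0 < a \<or> 0 < d"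
  shows "word_cohn k \<sigma> (a+c, b+d) =
    m2_minus (m2_mult (word_cohn k \<sigma> (a,b)) (word_cohn k \<sigma> (c,d))) (Dmat k (\<sigma> (center_index (a+c, b+d))))"
proof (cases "a = 0")
  case True
  then have "b = 1" "c = 1" "1 \<le> d" using assms by simp_all
  then show ?thesis
    using word_matrix_one_succ[of "int d" k \<sigma>] trace_center_letter[of k \<sigma> 1 "d+1"] True
    by (auto simp: word_cohn_def C01_eq add.commute intro!: cohn_conj_recursion)
next
  case False
  have "int b * int c = int a * int d + 1" using det by (metis of_nat_1 of_nat_add of_nat_mult)
  moreover have "1 \<le> b" "1 \<le> c" using det by (cases b, simp_all, cases c, simp_all)
  ultimately show ?thesis
    using word_matrix_mediant[where a = "int a" and b = "int b" and c = "int c" and d = "int d"]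
      trace_center_letter[of k \<sigma> "a+c" "b+d"] False
    by (auto simp: word_cohn_def intro!: cohn_conj_recursion)
qed

lemma word_cohn_base:
  "word_cohn k \<sigma> (0,1) = C01 k \<sigma>" "word_cohn k \<sigma> (1,1) = C11 k \<sigma>" "word_cohn k \<sigma> (1,0) = C10 k \<sigma>"
proof -
  show "word_cohn k \<sigma> (0,1) = C01 k \<sigma>" by (simp add: word_cohn_def)
  have "cutting_word 1 1 = [(Hor,True),(Diag,True),(Vert,True),(Diag,False)]"
    "cutting_word 1 0 = [(Hor,True),(Diag,True)]"
    by (simp_all add: cutting_word_def cutting_letter_def letter_type_def letter_sign_def
        diag_gap_def diag_col_def upt_rec)
  then show "word_cohn k \<sigma> (1,1) = C11 k \<sigma>" "word_cohn k \<sigma> (1,0) = C10 k \<sigma>"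
    by (simp_all add: word_cohn_def C11_def C10_def cohn_conj_def Kc_eq Xm_def Ym_def Zm_def
        m2_one_def algebra_simps)
qed

lemma cohn_vertex_eq_word_cohn:
  "cohn_vertex k \<sigma> w = map_triple (word_cohn k \<sigma>) (farey_vertex w)"
proof (induction w)
  case Nil
  show ?case using word_cohn_base by simp
next
  case (Cons dir w)
  obtain a b c d where F: "farey_vertex w = ((a,b), (a+c,b+d), (c,d))" "b*c = a*d + 1" "0 < b" "0 < c"
    using farey_vertex_mediant by blast
  obtain m1 h m2 i m3 j where G: "gm_vertex k \<sigma> w = ((m1,h), (m2,i), (m3,j))"
    by (metis prod.exhaust)
  have labels: "h = \<sigma> (center_index (a,b))" "j = \<sigma> (center_index (c,d))"
    using gm_vertex_labels[of k \<sigma> w] F G by simp_all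
  show ?case
  proof (cases dir)
    case True
    have "word_cohn k \<sigma> (a + (a+c), b + (b+d)) =
      m2_minus (m2_mult (word_cohn k \<sigma> (a,b)) (word_cohn k \<sigma> (a+c,b+d))) (Dmat k j)"
      using word_cohn_mediant[of b "a+c" a "b+d"] F labels
      by (simp add: center_index_mediant_mediant distrib_left)
    then show ?thesis using True Cons.IH F G by (simp add: mediant_def)
  next
    case False
    have "word_cohn k \<sigma> (a+c+c, b+d+d) =
      m2_minus (m2_mult (word_cohn k \<sigma> (a+c,b+d)) (word_cohn k \<sigma> (c,d))) (Dmat k h)"
      using word_cohn_mediant[of "b+d" c "a+c" d] F labels
      by (simp add: center_index_mediant_mediant distrib_right)
    then show ?thesis using False Cons.IH F G by (simp add: mediant_def)
  qed
qed

end

lemma Kc_kfun: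
  assumes "\<sigma> permutes {1, 2, 3}"
  shows "Kc (kfun k1 k2 k3) = 3 + kfun k1 k2 k3 (\<sigma> 1) + kfun k1 k2 k3 (\<sigma> 2) + kfun k1 k2 k3 (\<sigma> 3)"
proof -
  let ?f = "kfun k1 k2 k3"
  have "\<sigma> 1 \<noteq> \<sigma> 2" "\<sigma> 1 \<noteq> \<sigma> 3" "\<sigma> 2 \<noteq> \<sigma> 3"
    using permutes_inj[OF assms] by (simp_all add: inj_eq)
  then have "?f (\<sigma> 1) + ?f (\<sigma> 2) + ?f (\<sigma> 3) = (\<Sum>i\<in>{1,2,3}. ?f (\<sigma> i))" by simp
  also have "\<dots> = (\<Sum>i\<in>{1,2,3}. ?f i)"
    using sum.permute[OF assms, of ?f] by (simp add: comp_def)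
  also have "\<dots> = ?f 1 + ?f 2 + ?f 3" by simp
  finally show ?thesis by (simp add: Kc_def kfun_def)
qed

section \<open>Geometry of the shifted segment\<close>

fun edge_crossed :: "int \<Rightarrow> int \<Rightarrow> edge \<Rightarrow> bool" where
  "edge_crossed p q (Hor, i, j) \<longleftrightarrow> 0 \<le> j \<and> j < p \<and> p*i < j*q \<and> j*q \<le> p*(i+1)"
| "edge_crossed p q (Vert, i, j) \<longleftrightarrow> 0 \<le> i \<and> i < q \<and> q*j \<le> i*p \<and> i*p < q*(j+1)"
| "edge_crossed p q (Diag, i, j) \<longleftrightarrow> 0 \<le> i+j+1 \<and> i+j+1 < p+q \<and>
     i*(p+q) < (i+j+1)*q \<and> (i+j+1)*q \<le> (i+1)*(p+q)"

fun crossing_time :: "nat \<Rightarrow> nat \<Rightarrow> real \<Rightarrow> edge \<Rightarrow> real" where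
  "crossing_time p q \<epsilon> (Hor, i, j) = of_int j / p"
| "crossing_time p q \<epsilon> (Vert, i, j) = (of_int i + \<epsilon>) / q"
| "crossing_time p q \<epsilon> (Diag, i, j) = (of_int (i+j+1) + \<epsilon>) / (p+q)"

lemma on_Hor_edge:
  "(\<exists>u\<in>{0..1::real}. (X, Y) = ((1-u)*x + u*(x+1), (1-u)*y + u*y)) \<longleftrightarrow> Y = y \<and> x \<le> X \<and> X \<le> x + 1"
  by (auto simp: algebra_simps intro!: bexI[of _ "X - x"])

lemma on_Vert_edge:
  "(\<exists>u\<in>{0..1::real}. (X, Y) = ((1-u)*x + u*x, (1-u)*y + u*(y+1))) \<longleftrightarrow> X = x \<and> y \<le> Y \<and> Y \<le> y + 1"
  by (auto simp: algebra_simps intro!: bexI[of _ "Y - y"])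

lemma on_Diag_edge:
  "(\<exists>u\<in>{0..1::real}. (X, Y) = ((1-u)*x + u*(x+1), (1-u)*(y+1) + u*y)) \<longleftrightarrow>
    X + Y = x + y + 1 \<and> x \<le> X \<and> X \<le> x + 1"
  by (auto simp: algebra_simps intro!: bexI[of _ "X - x"])

lemma crosses_at_Hor_iff:
  fixes \<epsilon> :: real
  assumes "0 < p" "0 < \<epsilon>" "p*\<epsilon> < 1"
  shows "crosses_at p q \<epsilon> (Hor,i,j) s \<longleftrightarrow> s = crossing_time p q \<epsilon> (Hor,i,j) \<and> edge_crossed p q (Hor,i,j)"
proof -
  define \<delta> where "\<delta> = real p * \<epsilon>"
  have \<delta>: "0 < \<delta>" "\<delta> < 1" using assms by (simp_all add: \<delta>_def)
  have "crosses_at p q \<epsilon> (Hor,i,j) s \<longleftrightarrow> s = of_int j / p \<and> 0 \<le> s \<and> s < 1 \<and>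
    of_int i \<le> -\<epsilon> + s*q \<and> -\<epsilon> + s*q \<le> of_int i + 1"
    unfolding crosses_at_def seg_point_def
    using on_Hor_edge[of "-\<epsilon> + s*q" "s*p" "of_int i" "of_int j"] assms(1)
    by (auto simp: eq_divide_eq)
  also have "\<dots> \<longleftrightarrow> s = of_int j / p \<and> 0 \<le> of_int j / p \<and> of_int j / p < (1::real) \<and>
    of_int i \<le> -\<epsilon> + of_int j / p * q \<and> -\<epsilon> + of_int j / p * q \<le> of_int i + 1"
    by (rule conj_cong[OF refl]) (simp only:)
  also have "\<dots> \<longleftrightarrow> s = of_int j / p \<and> 0 \<le> j \<and> j < p \<and>
    of_int (p*i) + \<delta> \<le> of_int (j*q) \<and> of_int (j*q) \<le> of_int (p*(i+1)) + \<delta>"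
    using assms(1) by (intro conj_cong refl) (simp_all add: \<delta>_def field_simps of_int_less_of_nat_iff)
  finally show ?thesis
    unfolding of_int_add_frac_iff(1)[OF \<delta>, of "int p * i" "j * int q"]
      of_int_add_frac_iff(3)[OF \<delta>, of "j * int q" "int p * (i+1)"] by simp
qed

lemma crosses_at_Vert_iff:
  fixes \<epsilon> :: real
  assumes "0 < p" "0 < q" "0 < \<epsilon>" "p*\<epsilon> < 1"
  shows "crosses_at p q \<epsilon> (Vert,i,j) s \<longleftrightarrow> s = crossing_time p q \<epsilon> (Vert,i,j) \<and> edge_crossed p q (Vert,i,j)"
proof -
  define \<delta> where "\<delta> = real p * \<epsilon>"
  have "1 * \<epsilon> \<le> p * \<epsilon>" using assms by (intro mult_right_mono) auto
  then have \<epsilon>: "\<epsilon> < 1" using assms(4) by linarith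
  have \<delta>: "0 < \<delta>" "\<delta> < 1" using assms by (simp_all add: \<delta>_def)
  have "crosses_at p q \<epsilon> (Vert,i,j) s \<longleftrightarrow> s = (of_int i + \<epsilon>) / q \<and> 0 \<le> s \<and> s < 1 \<and>
    of_int j \<le> s*p \<and> s*p \<le> of_int j + 1"
    unfolding crosses_at_def seg_point_def
    using on_Vert_edge[of "-\<epsilon> + s*q" "s*p" "of_int i" "of_int j"] assms(2)
    by (auto simp: eq_divide_eq algebra_simps)
  also have "\<dots> \<longleftrightarrow> s = (of_int i + \<epsilon>) / q \<and>
    0 \<le> (of_int i + \<epsilon>) / q \<and> (of_int i + \<epsilon>) / q < 1 \<and>
    of_int j \<le> (of_int i + \<epsilon>) / q * p \<and> (of_int i + \<epsilon>) / q * p \<le> of_int j + 1"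
    by (rule conj_cong[OF refl]) (simp only:)
  also have "\<dots> \<longleftrightarrow> s = (of_int i + \<epsilon>) / q \<and> of_int 0 \<le> of_int i + \<epsilon> \<and> of_int i + \<epsilon> < of_int q \<and>
      of_int (q*j) \<le> of_int (i*p) + \<delta> \<and> of_int (i*p) + \<delta> \<le> of_int (q*(j+1))"
    using assms(2) by (intro conj_cong refl) (simp_all add: \<delta>_def field_simps)
  finally show ?thesis
    unfolding of_int_add_frac_iff(3)[OF assms(3) \<epsilon>, of 0 i]
      of_int_add_frac_iff(2)[OF assms(3) \<epsilon>, of i "int q"]
      of_int_add_frac_iff(3)[OF \<delta>, of "int q * j" "i * int p"]
      of_int_add_frac_iff(1)[OF \<delta>, of "i * int p" "int q * (j+1)"] by simp
qed

lemma crosses_at_Diag_iff: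
  fixes \<epsilon> :: real
  assumes "0 < p" "0 < q" "0 < \<epsilon>" "p*\<epsilon> < 1"
  shows "crosses_at p q \<epsilon> (Diag,i,j) s \<longleftrightarrow> s = crossing_time p q \<epsilon> (Diag,i,j) \<and> edge_crossed p q (Diag,i,j)"
proof -
  define \<delta> where "\<delta> = real p * \<epsilon>"
  define n where "n = i + j + 1"
  have "1 * \<epsilon> \<le> p * \<epsilon>" using assms by (intro mult_right_mono) auto
  then have \<epsilon>: "\<epsilon> < 1" using assms(4) by linarith
  have \<delta>: "0 < \<delta>" "\<delta> < 1" using assms by (simp_all add: \<delta>_def)
  have "crosses_at p q \<epsilon> (Diag,i,j) s \<longleftrightarrow> s = (of_int n + \<epsilon>) / (p+q) \<and> 0 \<le> s \<and> s < 1 \<and>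
    of_int i \<le> -\<epsilon> + s*q \<and> -\<epsilon> + s*q \<le> of_int i + 1"
    unfolding crosses_at_def seg_point_def
    using on_Diag_edge[of "-\<epsilon> + s*q" "s*p" "of_int i" "of_int j"] assms(1)
    by (auto simp: eq_divide_eq algebra_simps n_def)
  also have "\<dots> \<longleftrightarrow> s = (of_int n + \<epsilon>) / (p+q) \<and>
    0 \<le> (of_int n + \<epsilon>) / (p+q) \<and> (of_int n + \<epsilon>) / (p+q) < 1 \<and>
    of_int i \<le> -\<epsilon> + (of_int n + \<epsilon>) / (p+q) * q \<and> -\<epsilon> + (of_int n + \<epsilon>) / (p+q) * q \<le> of_int i + 1"
    by (rule conj_cong[OF refl]) (simp only:)
  also have "\<dots> \<longleftrightarrow> s = (of_int n + \<epsilon>) / (p+q) \<and> of_int 0 \<le> of_int n + \<epsilon> \<and> of_int n + \<epsilon> < of_int (p+q) \<and>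
      of_int (i*(p+q)) + \<delta> \<le> of_int (n*q) \<and> of_int (n*q) \<le> of_int ((i+1)*(p+q)) + \<delta>"
    using assms(1) by (intro conj_cong refl) (simp_all add: \<delta>_def field_simps)
  finally show ?thesis
    unfolding of_int_add_frac_iff(3)[OF assms(3) \<epsilon>, of 0 n]
      of_int_add_frac_iff(2)[OF assms(3) \<epsilon>, of n "int (p+q)"]
      of_int_add_frac_iff(1)[OF \<delta>, of "i * int (p+q)" "n * int q"]
      of_int_add_frac_iff(3)[OF \<delta>, of "n * int q" "(i+1) * int (p+q)"] by (simp add: n_def)
qed

lemma crosses_at_iff:
  fixes \<epsilon> :: real
  assumes "0 < p" "0 < q" "0 < \<epsilon>" "p*\<epsilon> < 1"
  shows "crosses_at p q \<epsilon> e s \<longleftrightarrow> s = crossing_time p q \<epsilon> e \<and> edge_crossed p q e"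
proof -
  obtain t i j where "e = (t, i, j)" by (metis prod.exhaust)
  then show ?thesis
    using crosses_at_Hor_iff[OF assms(1,3,4)] crosses_at_Vert_iff[OF assms] crosses_at_Diag_iff[OF assms]
    by (cases t) simp_all
qed

definition crossed_edge :: "int \<Rightarrow> int \<Rightarrow> nat \<Rightarrow> edge" where
  "crossed_edge p q k = (let n = int (k div 2) in
     if odd k then (Diag, diag_col p q n - 1, n - diag_col p q n)
     else if diag_col p q n = diag_col p q (n-1) then (Hor, diag_col p q n - 1, n - diag_col p q n)
     else (Vert, diag_col p q (n-1), n - 1 - diag_col p q (n-1)))"

lemma fst_crossed_edge: "fst (crossed_edge p q k) = letter_type p q k"
  by (simp add: crossed_edge_def letter_type_def Let_def)

lemma crossed_edge_crossed:
  assumes "0 < p" "0 < q" "k < nat (2*(p+q))"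
  shows "edge_crossed p q (crossed_edge p q k)"
proof -
  define n where "n = int (k div 2)"
  have N: "0 < p+q" using assms by simp
  have n: "0 \<le> n" "n < p+q" using assms by (auto simp: n_def)
  note bounds = diag_col_bounds[OF N, of n] diag_col_bounds[OF N, of "n-1"]
  note range = diag_col_range[OF assms(1,2) n]
  consider "odd k" | "even k" "diag_col p q n = diag_col p q (n-1)"
    | "even k" "diag_col p q n = diag_col p q (n-1) + 1"
    using diag_col_step[of p q n] assms by fastforce
  then show ?thesis
  proof cases
    case 1
    then show ?thesis using n bounds by (simp add: crossed_edge_def n_def[symmetric] algebra_simps)
  next
    case 2
    then show ?thesis using range bounds by (simp add: crossed_edge_def n_def[symmetric] algebra_simps)
  next
    case 3
    then have "1 \<le> n" using n diag_col_small[OF assms(1,2)] by (cases "n = 0") auto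
    then have "0 \<le> diag_col p q (n-1)" using diag_col_range[OF assms(1,2), of "n-1"] n by simp
    then show ?thesis using 3 range bounds by (simp add: crossed_edge_def n_def[symmetric] algebra_simps)
  qed
qed

lemma crossed_edge_surj:
  assumes "0 < p" "0 < q" "edge_crossed p q e"
  shows "\<exists>k < nat (2*(p+q)). crossed_edge p q k = e"
proof -
  obtain t i j where e: "e = (t, i, j)" by (metis prod.exhaust)
  define n where "n = i + j + 1"
  have N: "0 < p+q" using assms by simp
  show ?thesis
  proof (cases t)
    case Hor
    then have h: "0 \<le> j" "j < p" "p*i < j*q" "j*q \<le> p*(i+1)" using assms e by auto
    have "0 \<le> j*q" "j*q < p*q" using h assms by (simp_all add: mult_strict_right_mono)
    then have "p*0 \<le> p*(i+1)" "p*i < p*q" using h by linarith+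
    then have "0 \<le> n" "n < p+q"
      using h assms by (simp_all add: n_def mult_less_cancel_left_pos zero_le_mult_iff zero_less_mult_iff)
    moreover have "diag_col p q n = i+1" "diag_col p q (n-1) = i+1"
      using h assms by (auto intro!: diag_col_unique simp: n_def algebra_simps)
    ultimately show ?thesis using Hor e
      by (intro exI[of _ "2 * nat n"]) (auto simp: crossed_edge_def n_def)
  next
    case Vert
    then have h: "0 \<le> i" "i < q" "q*j \<le> i*p" "i*p < q*(j+1)" using assms e by auto
    have "0 \<le> i*p" "i*p < q*p" using h assms by (simp_all add: mult_strict_right_mono)
    then have "q*0 < q*(j+1)" "q*j < q*p" using h by linarith+
    then have "0 \<le> n" "n < p+q"
      using h assms by (simp_all add: n_def mult_less_cancel_left_pos zero_le_mult_iff zero_less_mult_iff)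
    moreover have "diag_col p q n = i+1" "diag_col p q (n-1) = i"
      using h assms by (auto intro!: diag_col_unique simp: n_def algebra_simps)
    ultimately show ?thesis using Vert e
      by (intro exI[of _ "2 * nat n"]) (auto simp: crossed_edge_def n_def)
  next
    case Diag
    then have h: "0 \<le> n" "n < p+q" "i*(p+q) < n*q" "n*q \<le> (i+1)*(p+q)"
      using assms e by (auto simp: n_def)
    then have "diag_col p q n = i+1" using N by (intro diag_col_unique) (simp_all add: algebra_simps)
    then show ?thesis using Diag e h
      by (intro exI[of _ "2 * nat n + 1"]) (auto simp: crossed_edge_def n_def)
  qed
qed

lemma diag_col_mult_real:
  "real_of_int (diag_col (int p) (int q) n) * (p+q) = of_int (diag_gap (int p) (int q) n) + of_int n * q"
proof -
  have "diag_col (int p) (int q) n * (int p + int q) = diag_gap (int p) (int q) n + n * int q"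
    by (simp add: diag_gap_def)
  from arg_cong[where f = real_of_int, OF this] show ?thesis by simp
qed

lemma crossing_time_Hor:
  fixes p q :: nat and \<epsilon> :: real
  assumes "0 < p" "0 < q" "0 < \<epsilon>" "p*\<epsilon> < 1" "even k"
    and Hor: "diag_col p q (int (k div 2)) = diag_col p q (int (k div 2) - 1)"
  defines "n \<equiv> int (k div 2)" and "t \<equiv> crossing_time p q \<epsilon> (crossed_edge p q k)"
  shows "(of_int n - 1 + \<epsilon>) / (p+q) < t \<and> t < (of_int n + \<epsilon>) / (p+q)"
proof -
  define c where "c = diag_col p q n"
  define g where "g = diag_gap p q n"
  have N: "0 < int p + int q" using assms by simp
  have "0 \<le> g" "g + q < p + q"
    using diag_gap_bounds[OF N, of n] diag_gap_bounds[OF N, of "n-1"] Hor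
    by (simp_all add: g_def n_def diag_gap_def algebra_simps)
  then have gb: "real_of_int g \<le> real p - 1" "0 \<le> real_of_int g" by linarith+
  have e: "(real_of_int n - 1 + \<epsilon>) * p = real_of_int n * p - p + \<epsilon> * p"
    "(real_of_int n + \<epsilon>) * p = real_of_int n * p + \<epsilon> * p"
    "real_of_int (n - c) * (p+q) = real_of_int n * p - real_of_int g"
    using diag_col_mult_real[of p q n] by (simp_all add: c_def g_def algebra_simps)
  have \<delta>: "0 < \<epsilon> * p" "\<epsilon> * p < 1" using assms by (simp_all add: mult.commute)
  have "(real_of_int n - 1 + \<epsilon>) * p < real_of_int (n - c) * (p+q)"
    unfolding e(1,3) using gb \<delta> by linarith
  moreover have "real_of_int (n - c) * (p+q) < (real_of_int n + \<epsilon>) * p"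
    unfolding e(2,3) using gb \<delta> by linarith
  moreover have "diag_col p q n = diag_col p q (n-1)" using Hor by (simp add: n_def)
  ultimately show ?thesis using assms(1,2,5)
    by (simp add: t_def crossed_edge_def n_def[symmetric] c_def[symmetric] divide_less_divide_iff)
qed

lemma crossing_time_Vert:
  fixes p q :: nat and \<epsilon> :: real
  assumes "0 < p" "0 < q" "0 < \<epsilon>" "p*\<epsilon> < 1" "even k"
    and Vert: "diag_col p q (int (k div 2)) = diag_col p q (int (k div 2) - 1) + 1"
  defines "n \<equiv> int (k div 2)" and "t \<equiv> crossing_time p q \<epsilon> (crossed_edge p q k)"
  shows "(of_int n - 1 + \<epsilon>) / (p+q) < t \<and> t < (of_int n + \<epsilon>) / (p+q)"
proof -
  define c where "c = diag_col p q n"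
  define g where "g = diag_gap p q n"
  have N: "0 < int p + int q" using assms by simp
  have "0 \<le> g - p" "g - p < q"
    using diag_gap_bounds[OF N, of n] diag_gap_bounds[OF N, of "n-1"] Vert
    by (simp_all add: g_def n_def diag_gap_def algebra_simps)
  then have gb: "0 \<le> real_of_int g - p" "real_of_int g - p \<le> real q - 1" by linarith+
  have e: "(real_of_int n - 1 + \<epsilon>) * q = real_of_int n * q - q + \<epsilon> * q"
    "(real_of_int n + \<epsilon>) * q = real_of_int n * q + \<epsilon> * q"
    "(real_of_int (c - 1) + \<epsilon>) * (p+q) =
      real_of_int g + real_of_int n * q - p - q + \<epsilon> * p + \<epsilon> * q"
    using diag_col_mult_real[of p q n] by (simp_all add: c_def g_def algebra_simps)
  have \<delta>: "0 < \<epsilon> * p" "\<epsilon> * p < 1" using assms by (simp_all add: mult.commute)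
  have "(real_of_int n - 1 + \<epsilon>) * q < (real_of_int (c - 1) + \<epsilon>) * (p+q)"
    unfolding e(1,3) using gb \<delta> by linarith
  moreover have "(real_of_int (c - 1) + \<epsilon>) * (p+q) < (real_of_int n + \<epsilon>) * q"
    unfolding e(2,3) using gb \<delta> by linarith
  moreover have "diag_col p q n = diag_col p q (n-1) + 1" using Vert by (simp add: n_def)
  ultimately show ?thesis using assms(1,2,5)
    by (simp add: t_def crossed_edge_def n_def[symmetric] c_def[symmetric] divide_less_divide_iff)
qed

text \<open>The crossing time is \<open>(x + y + \<epsilon>)/(p + q)\<close> at the crossing point \<open>(x, y)\<close>, so the edges are
  crossed in the order of their position along the antidiagonals.\<close>
lemma crossing_time_crossed_edge:
  fixes p q k :: nat and \<epsilon> :: real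
  assumes "0 < p" "0 < q" "0 < \<epsilon>" "p*\<epsilon> < 1"
  defines "n \<equiv> int (k div 2)" and "t \<equiv> crossing_time p q \<epsilon> (crossed_edge p q k)"
  shows "odd k \<Longrightarrow> t = (of_int n + \<epsilon>) / (p+q)"
    and "even k \<Longrightarrow> (of_int n - 1 + \<epsilon>) / (p+q) < t \<and> t < (of_int n + \<epsilon>) / (p+q)"
proof -
  show "odd k \<Longrightarrow> t = (of_int n + \<epsilon>) / (p+q)"
    by (simp add: t_def crossed_edge_def n_def[symmetric])
  have "diag_col p q n = diag_col p q (n-1) \<or> diag_col p q n = diag_col p q (n-1) + 1"
    using assms by (intro diag_col_step) simp_all
  then show "even k \<Longrightarrow> (of_int n - 1 + \<epsilon>) / (p+q) < t \<and> t < (of_int n + \<epsilon>) / (p+q)"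
    using crossing_time_Hor[OF assms(1-4)] crossing_time_Vert[OF assms(1-4)]
    unfolding n_def t_def by blast
qed

lemma letter_sign_edge_mid:
  "2 * (real q * snd (edge_mid (crossed_edge p q k)) - real p * fst (edge_mid (crossed_edge p q k))) =
    of_int (letter_sign p q k)"
  by (auto simp: crossed_edge_def edge_mid_def letter_sign_def diag_gap_def Let_def field_simps)

lemma right_side_crossed_edge:
  fixes \<epsilon> :: real
  assumes "0 < p" "0 < \<epsilon>" "2 * real p * \<epsilon> < 1"
  shows "right_side p q \<epsilon> (edge_mid (crossed_edge p q k)) \<longleftrightarrow> \<not> 0 < letter_sign p q k"
proof -
  have \<delta>: "0 < 2 * real p * \<epsilon>" using assms by simp
  have "right_side p q \<epsilon> (edge_mid (crossed_edge p q k)) \<longleftrightarrow>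
      of_int (letter_sign p q k) < of_int 0 + 2 * real p * \<epsilon>"
    unfolding letter_sign_edge_mid[symmetric] right_side_def by (auto simp: algebra_simps)
  then show ?thesis unfolding of_int_add_frac_iff(4)[OF \<delta> assms(3)] by (simp add: not_less)
qed

lemma crossing_time_strict_mono:
  fixes p q :: nat and \<epsilon> :: real
  assumes "0 < p" "0 < q" "0 < \<epsilon>" "p*\<epsilon> < 1" "i < j" "j < 2*(p+q)"
  shows "crossing_time p q \<epsilon> (crossed_edge p q i) < crossing_time p q \<epsilon> (crossed_edge p q j)"
  using assms(5,6)
proof (induction j)
  case (Suc j)
  note time = crossing_time_crossed_edge[OF assms(1-4)]
  have "crossing_time p q \<epsilon> (crossed_edge p q j) < crossing_time p q \<epsilon> (crossed_edge p q (Suc j))"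
  proof (cases "odd j")
    case True
    then have "int (Suc j div 2) = int (j div 2) + 1" by presburger
    then show ?thesis using time(1)[of j] time(2)[of "Suc j"] True Suc.prems by simp
  next
    case False
    then have "Suc j div 2 = j div 2" by presburger
    then show ?thesis using time(2)[of j] time(1)[of "Suc j"] False Suc.prems by simp
  qed
  then show ?case using Suc by (cases "i = j") auto
qed simp

lemma crossed_list_eq:
  fixes p q :: nat and \<epsilon> :: real
  assumes "0 < p" "0 < q" "0 < \<epsilon>" "2 * p * \<epsilon> < 1"
  shows "crossed_list p q \<epsilon> = map (crossed_edge p q) [0..<2*(p+q)]"
proof -
  define L where "L = map (crossed_edge p q) [0..<2*(p+q)]"
  have pe: "p * \<epsilon> < 1" using assms by simp
  have len: "nat (2 * (int p + int q)) = 2*(p+q)" by simp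
  have crosses: "crosses_at p q \<epsilon> e s \<longleftrightarrow> s = crossing_time p q \<epsilon> e \<and> edge_crossed p q e" for e s
    using crosses_at_iff[of p q \<epsilon>] assms pe by simp
  have "set L = {e. edge_crossed p q e}"
  proof (intro equalityI subsetI)
    fix e assume "e \<in> set L"
    then show "e \<in> {e. edge_crossed p q e}"
      using crossed_edge_crossed[of p q] assms unfolding len by (auto simp: L_def)
  next
    fix e assume "e \<in> {e. edge_crossed p q e}"
    then obtain k where "k < 2*(p+q)" "crossed_edge p q k = e"
      using crossed_edge_surj[of p q e] assms unfolding len by auto
    then show "e \<in> set L" by (auto simp: L_def)
  qed
  then have set_L: "set L = crossed_edges p q \<epsilon>" by (auto simp: crossed_edges_def crosses)
  have param: "cross_param p q \<epsilon> e = crossing_time p q \<epsilon> e" if "e \<in> set L" for e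
    using that set_L by (auto simp: cross_param_def crossed_edges_def crosses)
  have sorted: "sorted_wrt (\<lambda>e f. cross_param p q \<epsilon> e < cross_param p q \<epsilon> f) L"
    using crossing_time_strict_mono[OF assms(1-3) pe] param
    by (auto simp: L_def sorted_wrt_map sorted_wrt_iff_nth_less)
  have "sorted_wrt (<) (map (cross_param p q \<epsilon>) L)" using sorted by (simp add: sorted_wrt_map)
  then have "distinct L" by (simp add: strict_sorted_iff distinct_map)
  then have "crossed_list p q \<epsilon> = L"
    unfolding crossed_list_def using set_L sorted
    by (intro the_equality) (auto intro: sorted_wrt_image_eq)
  then show ?thesis by (simp add: L_def)
qed

lemma word_eps_eq:
  fixes p q :: nat and \<epsilon> :: real
  assumes "0 < p" "0 < q" "0 < \<epsilon>" "2 * p * \<epsilon> < 1"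
  shows "word_eps p q \<epsilon> = cutting_word p q"
proof -
  have "nat (2 * (int p + int q)) = 2*(p+q)" by simp
  then show ?thesis
    using assms by (auto simp: word_eps_def crossed_list_eq cutting_word_def cutting_letter_def
        fst_crossed_edge right_side_crossed_edge)
qed

lemma omega_bar_eq:
  assumes "0 < p" "0 < q"
  shows "omega_bar p q = cutting_word p q"
proof -
  have "\<forall>\<^sub>F \<epsilon> in at_right 0. word_eps p q \<epsilon> = cutting_word p q"
    unfolding eventually_at_right_field
  proof (intro exI[of _ "1 / (2 * p)"] conjI allI impI)
    show "(0::real) < 1 / (2 * p)" using assms by simp
    fix \<epsilon> :: real assume "0 < \<epsilon>" "\<epsilon> < 1 / (2 * p)"
    then show "word_eps p q \<epsilon> = cutting_word p q"
      using assms by (intro word_eps_eq) (simp_all add: field_simps)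
  qed
  moreover have "w = cutting_word p q" if "\<forall>\<^sub>F \<epsilon> in at_right 0. word_eps p q \<epsilon> = w" for w
  proof -
    have "\<forall>\<^sub>F \<epsilon> in at_right (0::real). w = cutting_word p q"
      using that calculation by eventually_elim simp
    then show ?thesis by simp
  qed
  ultimately show ?thesis unfolding omega_bar_def by (rule the_equality)
qed

theorem theorem5p6:
  fixes k1 k2 k3 :: nat and \<sigma> :: "nat \<Rightarrow> nat" and p q :: nat
  assumes "\<sigma> permutes {1, 2, 3}"
    and "coprime p q" and "0 < p" and "0 < q"
  shows "cohn_matrix (kfun k1 k2 k3) \<sigma> p q =
         m2_mult (M2 (-1) 0 0 1) (m2_mult (M_bar (kfun k1 k2 k3) \<sigma> p q) (M2 1 0 0 (-1)))"
proof -
  interpret cohn_params "kfun k1 k2 k3" \<sigma>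
    by unfold_locales (rule Kc_kfun[OF assms(1)])
  define w where "w = (SOME w. fst (snd (farey_vertex w)) = (p, q))"
  have "fst (snd (farey_vertex w)) = (p, q)"
    unfolding w_def using farey_vertex_exists[OF assms(2-4)] by (rule someI_ex)
  then have "cohn_matrix (kfun k1 k2 k3) \<sigma> p q = word_cohn (kfun k1 k2 k3) \<sigma> (p, q)"
    using cohn_vertex_eq_word_cohn[of w]
    by (cases "farey_vertex w") (simp add: cohn_matrix_def w_def[symmetric])
  also have "\<dots> = cohn_conj (word_matrix (kfun k1 k2 k3) \<sigma> (cutting_word p q))"
    using assms(3) by (simp add: word_cohn_def)
  finally show ?thesis
    using omega_bar_eq[OF assms(3,4)] by (simp add: cohn_conj_def M_bar_def)
qed

end
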